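(* Let $0<\lambda<\frac12$ and let $X$ be a $d$-dimensional $(d+1)$-partite simplicial complex that is a $\frac{\lambda}{(d+1)\lambda+1}$-one-sided link expander. Let $I,J\subseteq\{0,\dots,d\}$ be nonempty disjoint color sets, and let $C^{I,J}$ be the bipartite operator of the $(I,J)$-colored walk. Then $$\lambda(C^{I,J})\le|I|\,|J|\,\lambda.$$
   Context: **Weighted simplicial complexes.** $X(k)$ denotes the faces of size $k+1$, weighted via a distribution on $X(d)$: choose a $d$-face, then a uniform chain of subfaces. Links are $X_s=\{u\setminus s:s\subseteq u\in X\}$ with conditional measures. **Link expansion.** $X$ is a $\mu$-one-sided link expander if for every $-1\le k\le d-2$ and $s\in X(k)$, the second largest eigenvalue of the random walk on the underlying graph of $X_s$ (vertices $X_s(0)$, edges $X_s(1)$) is at most $\mu$. **Partite complexes and colors.** $X$ is $(d+1)$-partite if $X(0)=V_0\sqcup\dots\sqcup V_d$ and every $d$-face has exactly one vertex in each $V_i$. The color of a face $s$ is $\mathrm{col}(s)=\{i:s\cap V_i\neq\emptyset\}$, and $X[I]=\{s\in X:\mathrm{col}(s)=I\}$, with the measure on $X[I]$ conditioned on color $I$. **Colored walk.** The $(I,J)$-colored walk is the bipartite graph $L=X[I]$, $R=X[J]$ with edges $(s,t)$ such that $s\sqcup t\in X[I\sqcup J]$, chosen with probability proportional to the measure of $s\sqcup t$ in $X[I\sqcup J]$. **Bipartite expansion.** $\lambda(B)=\sup\{\langle Bf,g\rangle:\|f\|=\|g\|=1,\ f\perp\text{constants}\}$ for the bipartite averaging operator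 $Bf(v)=\mathbb E_{w\sim v}f(w)$. *)

theory Defs
  imports Complex_Main "HOL-Library.Extended_Real"
begin

text \<open>The complex X is the downward closure of F.\<close>

definition weighted_complex :: "nat \<Rightarrow> 'a set set \<Rightarrow> ('a set \<Rightarrow> real) \<Rightarrow> bool" where
  "weighted_complex d F w \<longleftrightarrow>
     finite F \<and> F \<noteq> {} \<and> (\<forall>T\<in>F. card T = d + 1) \<and>
     (\<forall>T\<in>F. w T > 0) \<and> (\<Sum>T\<in>F. w T) = 1"

definition faces :: "'a set set \<Rightarrow> 'a set set" where
  "faces F = {s. \<exists>T\<in>F. s \<subseteq> T}"

text \<open>Measure of a face s (of size k+1) in X(k): pick a d-face T according to w,
  then a uniformly random chain of subfaces; its (k+1)-element member is a uniform
  (k+1)-subset of T.\<close>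

definition meas :: "nat \<Rightarrow> 'a set set \<Rightarrow> ('a set \<Rightarrow> real) \<Rightarrow> 'a set \<Rightarrow> real" where
  "meas d F w s = (\<Sum>T\<in>{T\<in>F. s \<subseteq> T}. w T) / real ((d + 1) choose card s)"

definition link_verts :: "'a set set \<Rightarrow> 'a set \<Rightarrow> 'a set" where
  "link_verts F s = {v. v \<notin> s \<and> insert v s \<in> faces F}"

definition link_vmeas :: "nat \<Rightarrow> 'a set set \<Rightarrow> ('a set \<Rightarrow> real) \<Rightarrow> 'a set \<Rightarrow> 'a \<Rightarrow> real" where
  "link_vmeas d F w s v =
     meas d F w (insert v s) / (\<Sum>v'\<in>link_verts F s. meas d F w (insert v' s))"

definition link_walk ::
  "nat \<Rightarrow> 'a set set \<Rightarrow> ('a set \<Rightarrow> real) \<Rightarrow> 'a set \<Rightarrow> ('a \<Rightarrow> real) \<Rightarrow> 'a \<Rightarrow> real" where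
  "link_walk d F w s f v =
     (\<Sum>u\<in>{u\<in>link_verts F s. u \<noteq> v \<and> insert u (insert v s) \<in> faces F}.
         meas d F w (insert u (insert v s)) * f u) /
     (\<Sum>u\<in>{u\<in>link_verts F s. u \<noteq> v \<and> insert u (insert v s) \<in> faces F}.
         meas d F w (insert u (insert v s)))"

text \<open>The walk is
  self-adjoint w.r.t. the link measure and fixes constants, so its spectrum is the
  eigenvalue 1 (constants) together with the eigenvalues on the orthogonal
  complement of the constants; the condition says the latter are all at most mu.\<close>
definition link_lambda2_le ::
  "nat \<Rightarrow> 'a set set \<Rightarrow> ('a set \<Rightarrow> real) \<Rightarrow> 'a set \<Rightarrow> real \<Rightarrow> bool" where
  "link_lambda2_le d F w s \<mu> \<longleftrightarrow>
     (\<forall>(f::'a \<Rightarrow> real) \<theta>.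
        (\<exists>v\<in>link_verts F s. f v \<noteq> 0) \<and>
        (\<Sum>v\<in>link_verts F s. link_vmeas d F w s v * f v) = 0 \<and>
        (\<forall>v\<in>link_verts F s. link_walk d F w s f v = \<theta> * f v)
        \<longrightarrow> \<theta> \<le> \<mu>)"

text \<open>mu-one-sided link expander: for all -1 \<le> k \<le> d-2 and s \<in> X(k),
  i.e. all faces s with card s = k+1 \<le> d-1.\<close>
definition one_sided_link_expander ::
  "nat \<Rightarrow> 'a set set \<Rightarrow> ('a set \<Rightarrow> real) \<Rightarrow> real \<Rightarrow> bool" where
  "one_sided_link_expander d F w \<mu> \<longleftrightarrow>
     (\<forall>s\<in>faces F. card s + 1 \<le> d \<longrightarrow> link_lambda2_le d F w s \<mu>)"

definition partite :: "nat \<Rightarrow> 'a set set \<Rightarrow> ('a \<Rightarrow> nat) \<Rightarrow> bool" where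
  "partite d F col \<longleftrightarrow> (\<forall>T\<in>F. inj_on col T \<and> col ` T = {0..d})"

definition colored :: "'a set set \<Rightarrow> ('a \<Rightarrow> nat) \<Rightarrow> nat set \<Rightarrow> 'a set set" where
  "colored F col I = {s\<in>faces F. col ` s = I}"

definition col_meas ::
  "nat \<Rightarrow> 'a set set \<Rightarrow> ('a set \<Rightarrow> real) \<Rightarrow> ('a \<Rightarrow> nat) \<Rightarrow> nat set \<Rightarrow> 'a set \<Rightarrow> real" where
  "col_meas d F w col I s = meas d F w s / (\<Sum>s'\<in>colored F col I. meas d F w s')"

definition col_walk ::
  "nat \<Rightarrow> 'a set set \<Rightarrow> ('a set \<Rightarrow> real) \<Rightarrow> ('a \<Rightarrow> nat) \<Rightarrow> nat set \<Rightarrow> nat set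
     \<Rightarrow> ('a set \<Rightarrow> real) \<Rightarrow> 'a set \<Rightarrow> real" where
  "col_walk d F w col I J f s =
     (\<Sum>t\<in>{t\<in>colored F col J. s \<union> t \<in> colored F col (I \<union> J)}.
         col_meas d F w col (I \<union> J) (s \<union> t) * f t) /
     (\<Sum>t\<in>{t\<in>colored F col J. s \<union> t \<in> colored F col (I \<union> J)}.
         col_meas d F w col (I \<union> J) (s \<union> t))"

definition col_inner ::
  "nat \<Rightarrow> 'a set set \<Rightarrow> ('a set \<Rightarrow> real) \<Rightarrow> ('a \<Rightarrow> nat) \<Rightarrow> nat set
     \<Rightarrow> ('a set \<Rightarrow> real) \<Rightarrow> ('a set \<Rightarrow> real) \<Rightarrow> real" where
  "col_inner d F w col I f g = (\<Sum>s\<in>colored F col I. col_meas d F w col I s * f s * g s)"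

definition col_norm ::
  "nat \<Rightarrow> 'a set set \<Rightarrow> ('a set \<Rightarrow> real) \<Rightarrow> ('a \<Rightarrow> nat) \<Rightarrow> nat set
     \<Rightarrow> ('a set \<Rightarrow> real) \<Rightarrow> real" where
  "col_norm d F w col I f = sqrt (col_inner d F w col I f f)"

text \<open>lambda(C^{I,J}) = sup { <C f, g> : ||f|| = ||g|| = 1, f orthogonal to constants },
  taken in the extended reals (so that the supremum of the empty set is -\<infinity>).\<close>
definition bip_lambda ::
  "nat \<Rightarrow> 'a set set \<Rightarrow> ('a set \<Rightarrow> real) \<Rightarrow> ('a \<Rightarrow> nat) \<Rightarrow> nat set \<Rightarrow> nat set \<Rightarrow> ereal" where
  "bip_lambda d F w col I J =
     Sup {ereal (col_inner d F w col I (col_walk d F w col I J f) g) | f g.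
            col_norm d F w col J f = 1 \<and> col_norm d F w col I g = 1 \<and>
            col_inner d F w col J f (\<lambda>_. 1) = 0}"

end

theory Submission
  imports Defs "HOL-Analysis.Analysis"
begin

text \<open>
  The \<open>(I, J)\<close>-colored walk in the link of a face \<open>s\<close> is realised on the top faces \<open>T \<supseteq> s\<close>, drawn
  according to \<open>w\<close>: its endpoints are the \<open>I\<close>- and \<open>J\<close>-colored parts of \<open>T\<close>, and \<open>\<lambda> \<le> c\<close> says that the
  covariance of centered functions of the two parts is at most \<open>c\<close> times the product of their norms.
  Conditioning on the vertex of one color \<open>k\<close> and decomposing the covariance (law of total
  covariance) gives two recursions.  For \<open>k \<in> J\<close> the constants add up: the bound for \<open>(I, J - {k})\<close> in
  the links of the \<open>k\<close>-vertices plus the bound for \<open>(I, {k})\<close>; so a bound \<open>\<gamma>\<close> for pairs of single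
  colors yields \<open>|I| |J| \<gamma>\<close>.  For a third color \<open>k\<close>, a bound \<open>\<gamma>\<close> for a pair in the links of the
  \<open>k\<close>-vertices and a bound \<open>\<sigma>\<close> for all pairs in \<open>s\<close> give the bound \<open>\<gamma> + (1 - \<gamma>) \<sigma>\<^sup>2\<close>; applied to the
  worst pair this forces \<open>\<sigma> \<le> \<gamma> / (1 - \<gamma>)\<close>.  Starting from faces of codimension two, where the
  spectral gap of the link gives \<open>\<mu>\<close>, this trickles down to \<open>\<gamma> = \<mu> / (1 - (d - 1) \<mu>) = \<lambda> / (2 \<lambda> + 1)\<close>
  for pairs of colors in the whole complex.
\<close>

section \<open>Elementary inequalities\<close>

lemma linear_coeff_eq_0_if_quadratic_nonpos:
  fixes \<alpha> \<beta> :: real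
  assumes "\<And>t. \<alpha> * t + \<beta> * t\<^sup>2 \<le> 0"
  shows "\<alpha> = 0"
proof (rule ccontr)
  assume "\<alpha> \<noteq> 0"
  define c where "c = \<bar>\<beta>\<bar> + 1"
  define t where "t = \<alpha> / (2 * c)"
  have c: "c > 0" "- c \<le> \<beta>" by (auto simp: c_def)
  have "\<beta> * t\<^sup>2 \<ge> - c * t\<^sup>2" using c by (intro mult_right_mono) auto
  moreover have "\<alpha> * t - c * t\<^sup>2 = \<alpha>\<^sup>2 / (4 * c)"
    using c by (simp add: t_def field_simps power2_eq_square)
  moreover have "\<alpha>\<^sup>2 / (4 * c) > 0" using \<open>\<alpha> \<noteq> 0\<close> c by simp
  ultimately show False using assms[of t] by linarith
qed

lemma weighted_Cauchy_Schwarz: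
  fixes w f g :: "'b \<Rightarrow> real"
  assumes "\<forall>x\<in>A. 0 \<le> w x"
  shows "(\<Sum>x\<in>A. w x * f x * g x) \<le> sqrt (\<Sum>x\<in>A. w x * (f x)\<^sup>2) * sqrt (\<Sum>x\<in>A. w x * (g x)\<^sup>2)"
proof -
  have sq: "(sqrt (w x) * h x)\<^sup>2 = w x * (h x)\<^sup>2" if "x \<in> A" for x and h :: "'b \<Rightarrow> real"
    using assms that by (simp add: power_mult_distrib)
  have "(\<Sum>x\<in>A. w x * f x * g x) = (\<Sum>x\<in>A. (sqrt (w x) * f x) * (sqrt (w x) * g x))"
    using assms by (intro sum.cong) (auto simp: mult_ac real_sqrt_mult_self)
  also have "\<dots> \<le> sqrt ((\<Sum>x\<in>A. (sqrt (w x) * f x) * (sqrt (w x) * g x))\<^sup>2)"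
    by simp
  also have "\<dots> \<le> sqrt ((\<Sum>x\<in>A. (sqrt (w x) * f x)\<^sup>2) * (\<Sum>x\<in>A. (sqrt (w x) * g x)\<^sup>2))"
    by (intro real_sqrt_le_mono Cauchy_Schwarz_ineq_sum)
  also have "\<dots> = sqrt (\<Sum>x\<in>A. w x * (f x)\<^sup>2) * sqrt (\<Sum>x\<in>A. w x * (g x)\<^sup>2)"
    by (simp add: sq real_sqrt_mult cong: sum.cong)
  finally show ?thesis .
qed

lemma sum_sqrt_mult_le:
  fixes a b :: "'b \<Rightarrow> real"
  assumes "\<forall>x\<in>A. 0 \<le> a x" "\<forall>x\<in>A. 0 \<le> b x"
  shows "(\<Sum>x\<in>A. sqrt (a x) * sqrt (b x)) \<le> sqrt (\<Sum>x\<in>A. a x) * sqrt (\<Sum>x\<in>A. b x)"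
  using weighted_Cauchy_Schwarz[of A "\<lambda>_. 1" "\<lambda>x. sqrt (a x)" "\<lambda>x. sqrt (b x)"] assms
  by (simp cong: sum.cong)

lemma sqrt_le_if_le_mult_sqrt:
  fixes \<Phi> \<sigma> A :: real
  assumes "0 \<le> \<Phi>" "0 \<le> \<sigma>" "0 \<le> A" "\<Phi> \<le> \<sigma> * sqrt A * sqrt \<Phi>"
  shows "sqrt \<Phi> \<le> \<sigma> * sqrt A"
proof (cases "\<Phi> = 0")
  case False
  with assms(1) have "sqrt \<Phi> > 0" by simp
  moreover have "sqrt \<Phi> * sqrt \<Phi> \<le> (\<sigma> * sqrt A) * sqrt \<Phi>" using assms(1,4) by simp
  ultimately show ?thesis using mult_right_le_imp_le by blast
qed (use assms in simp)

text \<open>With \<open>a = sqrt A\<close>, \<open>p = sqrt \<Phi>\<close> etc.\ the first product is at most \<open>a b - p q\<close>,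
  because \<open>(a b - p q)\<^sup>2 - (a\<^sup>2 - p\<^sup>2) (b\<^sup>2 - q\<^sup>2) = (a q - p b)\<^sup>2\<close>.\<close>
lemma sqrt_mult_interpolate_le:
  fixes A B \<Phi> \<Psi> \<sigma> \<gamma> :: real
  assumes "0 \<le> \<Phi>" "\<Phi> \<le> A" "0 \<le> \<Psi>" "\<Psi> \<le> B"
    and "sqrt \<Phi> \<le> \<sigma> * sqrt A" "sqrt \<Psi> \<le> \<sigma> * sqrt B"
    and "0 \<le> \<gamma>" "\<gamma> \<le> 1" "0 \<le> \<sigma>"
  shows "\<gamma> * sqrt (A - \<Phi>) * sqrt (B - \<Psi>) + sqrt \<Phi> * sqrt \<Psi> \<le> (\<gamma> + (1 - \<gamma>) * \<sigma>\<^sup>2) * sqrt A * sqrt B"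
proof -
  define a b p q where "a = sqrt A" and "b = sqrt B" and "p = sqrt \<Phi>" and "q = sqrt \<Psi>"
  have nn: "0 \<le> a" "0 \<le> b" "0 \<le> p" "0 \<le> q" and sq: "A = a\<^sup>2" "B = b\<^sup>2" "\<Phi> = p\<^sup>2" "\<Psi> = q\<^sup>2"
    using assms(1-4) by (auto simp: a_def b_def p_def q_def)
  have "p \<le> a" "q \<le> b" using assms(2,4) by (auto simp: a_def b_def p_def q_def)
  then have pq: "p * q \<le> a * b" using nn by (intro mult_mono) auto
  have "(A - \<Phi>) * (B - \<Psi>) \<le> (a * b - p * q)\<^sup>2"
  proof -
    have "(a * b - p * q)\<^sup>2 - (A - \<Phi>) * (B - \<Psi>) = (a * q - p * b)\<^sup>2"
      unfolding sq by (simp add: power2_eq_square algebra_simps)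
    then show ?thesis using zero_le_power2[of "a * q - p * b"] by linarith
  qed
  then have "sqrt (A - \<Phi>) * sqrt (B - \<Psi>) \<le> a * b - p * q"
    using pq by (metis real_sqrt_le_mono real_sqrt_abs real_sqrt_mult abs_of_nonneg diff_ge_0_iff_ge)
  moreover have "p * q \<le> \<sigma>\<^sup>2 * (a * b)"
  proof -
    have "p * q \<le> (\<sigma> * a) * (\<sigma> * b)"
      using assms(5,6,9) nn by (intro mult_mono) (auto simp: a_def b_def p_def q_def)
    then show ?thesis by (simp add: power2_eq_square mult_ac)
  qed
  ultimately have "\<gamma> * sqrt (A - \<Phi>) * sqrt (B - \<Psi>) + p * q \<le> \<gamma> * (a * b - p * q) + p * q"
    using assms(7) by (simp add: mult.assoc mult_left_mono)
  also have "\<dots> = \<gamma> * (a * b) + (1 - \<gamma>) * (p * q)" by (simp add: algebra_simps)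
  also have "\<dots> \<le> \<gamma> * (a * b) + (1 - \<gamma>) * (\<sigma>\<^sup>2 * (a * b))"
    using \<open>p * q \<le> \<sigma>\<^sup>2 * (a * b)\<close> assms(8) by (intro add_left_mono mult_left_mono) auto
  finally show ?thesis by (simp add: a_def b_def p_def q_def algebra_simps)
qed

lemma sum_off_diagonal_products:
  fixes h :: "'a \<Rightarrow> real"
  assumes "finite A"
  shows "(\<Sum>v\<in>A. \<Sum>u\<in>A - {v}. h u * h v) = (\<Sum>v\<in>A. h v)\<^sup>2 - (\<Sum>v\<in>A. (h v)\<^sup>2)"
proof -
  have "(\<Sum>u\<in>A - {v}. h u * h v) = h v * (\<Sum>u\<in>A. h u) - (h v)\<^sup>2" if "v \<in> A" for v
    using that assms
    by (simp add: sum.remove sum_distrib_right[symmetric] power2_eq_square algebra_simps)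
  then have "(\<Sum>v\<in>A. \<Sum>u\<in>A - {v}. h u * h v) = (\<Sum>v\<in>A. h v * (\<Sum>u\<in>A. h u) - (h v)\<^sup>2)"
    by (intro sum.cong) auto
  also have "\<dots> = (\<Sum>v\<in>A. h v)\<^sup>2 - (\<Sum>v\<in>A. (h v)\<^sup>2)"
    by (simp add: sum_subtractf sum_distrib_right[symmetric] power2_eq_square)
  finally show ?thesis .
qed

text \<open>Take \<open>\<alpha> = sqrt B\<close> and \<open>\<beta> = sqrt A\<close>; the Cauchy-Schwarz hypothesis covers \<open>A B = 0\<close>.\<close>
lemma le_mult_sqrt_if_forall_am_gm:
  fixes S A B m :: real
  assumes "0 \<le> A" "0 \<le> B"
    and am_gm: "\<And>\<alpha> \<beta>. 2 * \<alpha> * \<beta> * S \<le> m * (\<alpha>\<^sup>2 * A + \<beta>\<^sup>2 * B)"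
    and cs: "S \<le> sqrt A * sqrt B"
  shows "S \<le> m * sqrt A * sqrt B"
proof (cases "A = 0 \<or> B = 0")
  case False
  with assms(1,2) have "sqrt A > 0" "sqrt B > 0" by auto
  have "2 * sqrt B * sqrt A * S \<le> m * ((sqrt B)\<^sup>2 * A + (sqrt A)\<^sup>2 * B)" by (rule am_gm)
  also have "\<dots> = 2 * sqrt B * sqrt A * (m * sqrt A * sqrt B)"
    using assms(1,2) by (simp add: algebra_simps)
  finally show ?thesis using \<open>sqrt A > 0\<close> \<open>sqrt B > 0\<close> by simp
qed (use cs in auto)

lemma le_div_if_le_quadratic:
  fixes \<sigma> \<gamma> :: real
  assumes "\<sigma> < 1" "\<gamma> < 1" "\<sigma> \<le> \<gamma> + (1 - \<gamma>) * \<sigma>\<^sup>2"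
  shows "\<sigma> \<le> \<gamma> / (1 - \<gamma>)"
proof -
  have "(\<sigma> - 1) * ((1 - \<gamma>) * \<sigma> - \<gamma>) = (1 - \<gamma>) * \<sigma>\<^sup>2 - \<sigma> + \<gamma>"
    by (simp add: power2_eq_square algebra_simps)
  then have "0 \<le> (\<sigma> - 1) * ((1 - \<gamma>) * \<sigma> - \<gamma>)" using assms(3) by linarith
  then have "(1 - \<gamma>) * \<sigma> \<le> \<gamma>" using assms(1) by (simp add: zero_le_mult_iff)
  then show ?thesis using assms(2) by (simp add: field_simps)
qed

lemma trickle_constant:
  fixes \<mu> :: real
  assumes "0 \<le> \<mu>" "real (Suc m) * \<mu> < 1"
  defines "\<gamma> \<equiv> \<mu> / (1 - real m * \<mu>)"
  shows "0 \<le> \<gamma>" "\<gamma> < 1" "\<gamma> / (1 - \<gamma>) = \<mu> / (1 - real (Suc m) * \<mu>)"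
proof -
  have m: "0 < 1 - real m * \<mu>" using assms(1,2) by (simp add: algebra_simps)
  show "0 \<le> \<gamma>" "\<gamma> < 1" using m assms(1,2) by (simp_all add: \<gamma>_def field_simps)
  have "1 - \<gamma> = (1 - real (Suc m) * \<mu>) / (1 - real m * \<mu>)"
    using m by (simp add: \<gamma>_def field_simps)
  then show "\<gamma> / (1 - \<gamma>) = \<mu> / (1 - real (Suc m) * \<mu>)"
    using m by (simp add: \<gamma>_def)
qed

section \<open>Maximal correlation\<close>

text \<open>The bipartite operator between functions of \<open>X\<close> and functions of \<open>Y\<close>, with the weights \<open>w\<close> on
  \<open>A\<close>, has expansion at most \<open>c\<close>.\<close>
definition max_corr_le :: "'t set \<Rightarrow> ('t \<Rightarrow> real) \<Rightarrow> ('t \<Rightarrow> 'x) \<Rightarrow> ('t \<Rightarrow> 'y) \<Rightarrow> real \<Rightarrow> bool" where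
  "max_corr_le A w X Y c \<longleftrightarrow>
     (\<forall>f g. (\<Sum>T\<in>A. w T * f (X T)) = 0 \<longrightarrow> (\<Sum>T\<in>A. w T * g (Y T)) = 0 \<longrightarrow>
        (\<Sum>T\<in>A. w T * f (X T) * g (Y T))
          \<le> c * sqrt (\<Sum>T\<in>A. w T * (f (X T))\<^sup>2) * sqrt (\<Sum>T\<in>A. w T * (g (Y T))\<^sup>2))"

lemma max_corr_leD:
  "max_corr_le A w X Y c \<Longrightarrow> (\<Sum>T\<in>A. w T * f (X T)) = 0 \<Longrightarrow> (\<Sum>T\<in>A. w T * g (Y T)) = 0 \<Longrightarrow>
   (\<Sum>T\<in>A. w T * f (X T) * g (Y T))
     \<le> c * sqrt (\<Sum>T\<in>A. w T * (f (X T))\<^sup>2) * sqrt (\<Sum>T\<in>A. w T * (g (Y T))\<^sup>2)"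
  unfolding max_corr_le_def by blast

lemma max_corr_le_sym:
  assumes "max_corr_le A w X Y c"
  shows "max_corr_le A w Y X c"
  unfolding max_corr_le_def
proof (intro allI impI)
  fix f g
  assume "(\<Sum>T\<in>A. w T * f (Y T)) = 0" "(\<Sum>T\<in>A. w T * g (X T)) = 0"
  then show "(\<Sum>T\<in>A. w T * f (Y T) * g (X T))
      \<le> c * sqrt (\<Sum>T\<in>A. w T * (f (Y T))\<^sup>2) * sqrt (\<Sum>T\<in>A. w T * (g (X T))\<^sup>2)"
    using max_corr_leD[OF assms, of g f] by (simp add: mult_ac)
qed

lemma max_corr_le_mono:
  assumes "max_corr_le A w X Y c" "c \<le> c'" "\<forall>T\<in>A. 0 \<le> w T"
  shows "max_corr_le A w X Y c'"
  unfolding max_corr_le_def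
proof (intro allI impI)
  fix f g
  assume "(\<Sum>T\<in>A. w T * f (X T)) = 0" "(\<Sum>T\<in>A. w T * g (Y T)) = 0"
  then have "(\<Sum>T\<in>A. w T * f (X T) * g (Y T))
      \<le> c * (sqrt (\<Sum>T\<in>A. w T * (f (X T))\<^sup>2) * sqrt (\<Sum>T\<in>A. w T * (g (Y T))\<^sup>2))"
    using max_corr_leD[OF assms(1)] by (simp add: mult.assoc)
  also have "\<dots> \<le> c' * (sqrt (\<Sum>T\<in>A. w T * (f (X T))\<^sup>2) * sqrt (\<Sum>T\<in>A. w T * (g (Y T))\<^sup>2))"
    using assms(2,3) by (intro mult_right_mono mult_nonneg_nonneg real_sqrt_ge_zero sum_nonneg) auto
  finally show "(\<Sum>T\<in>A. w T * f (X T) * g (Y T))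
      \<le> c' * sqrt (\<Sum>T\<in>A. w T * (f (X T))\<^sup>2) * sqrt (\<Sum>T\<in>A. w T * (g (Y T))\<^sup>2)"
    by (simp add: mult.assoc)
qed

lemma max_corr_le_one: "\<forall>T\<in>A. 0 \<le> w T \<Longrightarrow> max_corr_le A w X Y 1"
  unfolding max_corr_le_def using weighted_Cauchy_Schwarz by auto

lemma max_corr_le_empty: "max_corr_le {} w X Y c"
  by (simp add: max_corr_le_def)

lemma max_corr_le_coarsen:
  assumes "\<forall>T\<in>A. X T = h (X' T)" "max_corr_le A w X' Y c"
  shows "max_corr_le A w X Y c"
  unfolding max_corr_le_def
proof (intro allI impI)
  fix f g
  assume "(\<Sum>T\<in>A. w T * f (X T)) = 0" "(\<Sum>T\<in>A. w T * g (Y T)) = 0"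
  then show "(\<Sum>T\<in>A. w T * f (X T) * g (Y T))
      \<le> c * sqrt (\<Sum>T\<in>A. w T * (f (X T))\<^sup>2) * sqrt (\<Sum>T\<in>A. w T * (g (Y T))\<^sup>2)"
    using max_corr_leD[OF assms(2), of "f \<circ> h" g] assms(1) by (simp cong: sum.cong)
qed

lemma max_corr_le_imp_le:
  assumes corr: "max_corr_le A w X Y c" and "0 \<le> c" and w: "\<forall>T\<in>A. 0 \<le> w T" "(\<Sum>T\<in>A. w T) = 1"
    and f: "(\<Sum>T\<in>A. w T * f (X T)) = 0" "(\<Sum>T\<in>A. w T * (f (X T))\<^sup>2) = 1"
    and g: "(\<Sum>T\<in>A. w T * (g (Y T))\<^sup>2) = 1"
  shows "(\<Sum>T\<in>A. w T * f (X T) * g (Y T)) \<le> c"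
proof -
  define m where "m = (\<Sum>T\<in>A. w T * g (Y T))"
  have "(\<Sum>T\<in>A. w T * (g (Y T) - m)) = (\<Sum>T\<in>A. w T * g (Y T)) - m * (\<Sum>T\<in>A. w T)"
    by (simp add: right_diff_distrib sum_subtractf sum_distrib_left mult.commute)
  then have centered: "(\<Sum>T\<in>A. w T * (g (Y T) - m)) = 0" using w(2) by (simp add: m_def)
  have "(\<Sum>T\<in>A. w T * (g (Y T) - m)\<^sup>2)
      = (\<Sum>T\<in>A. w T * (g (Y T))\<^sup>2) - 2 * m * (\<Sum>T\<in>A. w T * g (Y T)) + m\<^sup>2 * (\<Sum>T\<in>A. w T)"
    by (simp add: power2_eq_square algebra_simps sum.distrib sum_subtractf sum_distrib_left)
  then have var: "(\<Sum>T\<in>A. w T * (g (Y T) - m)\<^sup>2) \<le> 1"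
    using w(2) g by (simp add: m_def[symmetric] power2_eq_square)
  have "(\<Sum>T\<in>A. w T * f (X T) * g (Y T)) = (\<Sum>T\<in>A. w T * f (X T) * (g (Y T) - m))"
    using f(1) by (simp add: algebra_simps sum_subtractf sum_distrib_left[symmetric])
  also have "\<dots> \<le> c * sqrt 1 * sqrt (\<Sum>T\<in>A. w T * (g (Y T) - m)\<^sup>2)"
    using max_corr_leD[OF corr f(1) centered] f(2) by simp
  also have "\<dots> \<le> c" using var \<open>0 \<le> c\<close> by (simp add: mult_left_le)
  finally show ?thesis .
qed

definition max_corr :: "'t set \<Rightarrow> ('t \<Rightarrow> real) \<Rightarrow> ('t \<Rightarrow> 'x) \<Rightarrow> ('t \<Rightarrow> 'y) \<Rightarrow> real" where
  "max_corr A w X Y = Inf {c. 0 \<le> c \<and> max_corr_le A w X Y c}"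

lemma max_corr_least: "0 \<le> c \<Longrightarrow> max_corr_le A w X Y c \<Longrightarrow> max_corr A w X Y \<le> c"
  unfolding max_corr_def by (rule cInf_lower) (auto intro: bdd_belowI[of _ 0])

lemma max_corr_nonneg:
  assumes "\<forall>T\<in>A. 0 \<le> w T"
  shows "0 \<le> max_corr A w X Y"
proof -
  have "max_corr_le A w X Y 1" using assms by (rule max_corr_le_one)
  then show ?thesis unfolding max_corr_def using zero_le_one by (intro cInf_greatest) blast+
qed

lemma max_corr_le_max_corr:
  assumes w: "\<forall>T\<in>A. 0 \<le> w T"
  shows "max_corr_le A w X Y (max_corr A w X Y)"
  unfolding max_corr_le_def
proof (intro allI impI)
  fix f g
  assume cf: "(\<Sum>T\<in>A. w T * f (X T)) = 0" and cg: "(\<Sum>T\<in>A. w T * g (Y T)) = 0"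
  define S where "S = (\<Sum>T\<in>A. w T * f (X T) * g (Y T))"
  define N where "N = sqrt (\<Sum>T\<in>A. w T * (f (X T))\<^sup>2) * sqrt (\<Sum>T\<in>A. w T * (g (Y T))\<^sup>2)"
  have S_le: "S \<le> c * N" if "0 \<le> c" "max_corr_le A w X Y c" for c
    using max_corr_leD[OF that(2) cf cg]
    by (simp add: S_def N_def mult.assoc)
  have "N \<ge> 0"
    unfolding N_def using w by (intro mult_nonneg_nonneg real_sqrt_ge_zero sum_nonneg) auto
  then have "S \<le> max_corr A w X Y * N"
  proof (cases "N = 0")
    case False
    with \<open>N \<ge> 0\<close> have "N > 0" by simp
    have "S / N \<le> max_corr A w X Y"
      unfolding max_corr_def using max_corr_le_one[OF w, of X Y] S_le \<open>N > 0\<close> zero_le_one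
      by (intro cInf_greatest) (blast, simp add: divide_le_eq)
    with \<open>N > 0\<close> show ?thesis by (simp add: divide_le_eq)
  qed (use S_le[OF _ max_corr_le_one[OF w]] in simp)
  then show "S \<le> max_corr A w X Y * sqrt (\<Sum>T\<in>A. w T * (f (X T))\<^sup>2) * sqrt (\<Sum>T\<in>A. w T * (g (Y T))\<^sup>2)"
    by (simp add: N_def mult.assoc)
qed

section \<open>Conditioning on a random variable\<close>

text \<open>\<open>fiber_mean A w Z a z\<close> is the conditional expectation of \<open>a\<close> given \<open>Z = z\<close>.\<close>
definition fiber_mean :: "'t set \<Rightarrow> ('t \<Rightarrow> real) \<Rightarrow> ('t \<Rightarrow> 'z) \<Rightarrow> ('t \<Rightarrow> real) \<Rightarrow> 'z \<Rightarrow> real" where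
  "fiber_mean A w Z a z = (\<Sum>T\<in>{T\<in>A. Z T = z}. w T * a T) / (\<Sum>T\<in>{T\<in>A. Z T = z}. w T)"

context
  fixes A :: "'t set" and w :: "'t \<Rightarrow> real" and Z :: "'t \<Rightarrow> 'z"
  assumes finite: "finite A" and pos: "\<forall>T\<in>A. 0 < w T"
begin

lemma sum_by_fibers: "(\<Sum>T\<in>A. h T) = (\<Sum>z\<in>Z ` A. \<Sum>T\<in>{T\<in>A. Z T = z}. h T)"
  by (rule sum.image_gen[OF finite])

lemma sum_fiber_eq_fiber_mean:
  assumes "z \<in> Z ` A"
  shows "(\<Sum>T\<in>{T\<in>A. Z T = z}. w T * a T) = fiber_mean A w Z a z * (\<Sum>T\<in>{T\<in>A. Z T = z}. w T)"
proof -
  have "{T\<in>A. Z T = z} \<noteq> {}" using assms by auto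
  then have "(\<Sum>T\<in>{T\<in>A. Z T = z}. w T) > 0" using finite pos by (intro sum_pos) auto
  then show ?thesis by (simp add: fiber_mean_def)
qed

lemma fiber_mean_centered:
  assumes "z \<in> Z ` A"
  shows "(\<Sum>T\<in>{T\<in>A. Z T = z}. w T * (a T - fiber_mean A w Z a z)) = 0"
proof -
  have "(\<Sum>T\<in>{T\<in>A. Z T = z}. w T * (a T - fiber_mean A w Z a z))
      = (\<Sum>T\<in>{T\<in>A. Z T = z}. w T * a T) - fiber_mean A w Z a z * (\<Sum>T\<in>{T\<in>A. Z T = z}. w T)"
    by (simp add: algebra_simps sum_subtractf sum_distrib_left)
  then show ?thesis using sum_fiber_eq_fiber_mean[OF assms] by simp
qed

lemma fiber_mean_tower:
  "(\<Sum>T\<in>A. w T * fiber_mean A w Z a (Z T) * k (Z T)) = (\<Sum>T\<in>A. w T * a T * k (Z T))"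
proof -
  have "(\<Sum>T\<in>{T\<in>A. Z T = z}. w T * fiber_mean A w Z a (Z T) * k (Z T))
      = (\<Sum>T\<in>{T\<in>A. Z T = z}. w T * a T * k (Z T))" if "z \<in> Z ` A" for z
  proof -
    have "(\<Sum>T\<in>{T\<in>A. Z T = z}. w T * fiber_mean A w Z a (Z T) * k (Z T))
        = k z * (fiber_mean A w Z a z * (\<Sum>T\<in>{T\<in>A. Z T = z}. w T))"
      by (simp add: sum_distrib_left mult_ac)
    also have "\<dots> = k z * (\<Sum>T\<in>{T\<in>A. Z T = z}. w T * a T)"
      using sum_fiber_eq_fiber_mean[OF that] by simp
    also have "\<dots> = (\<Sum>T\<in>{T\<in>A. Z T = z}. w T * a T * k (Z T))"
      by (simp add: sum_distrib_left mult_ac)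
    finally show ?thesis .
  qed
  then show ?thesis by (simp add: sum_by_fibers[of "\<lambda>T. w T * _ T * k (Z T)"])
qed

lemma covariance_decomposition:
  fixes a b :: "'t \<Rightarrow> real"
  defines "\<phi> \<equiv> fiber_mean A w Z a" and "\<psi> \<equiv> fiber_mean A w Z b"
  shows "(\<Sum>T\<in>A. w T * a T * b T)
    = (\<Sum>T\<in>A. w T * (a T - \<phi> (Z T)) * (b T - \<psi> (Z T))) + (\<Sum>T\<in>A. w T * \<phi> (Z T) * \<psi> (Z T))"
proof -
  have "(\<Sum>T\<in>A. w T * \<phi> (Z T) * \<psi> (Z T)) = (\<Sum>T\<in>A. w T * a T * \<psi> (Z T))"
    unfolding \<phi>_def by (rule fiber_mean_tower)
  moreover have "(\<Sum>T\<in>A. w T * \<psi> (Z T) * \<phi> (Z T)) = (\<Sum>T\<in>A. w T * b T * \<phi> (Z T))"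
    unfolding \<psi>_def by (rule fiber_mean_tower)
  ultimately show ?thesis
    by (simp add: algebra_simps sum.distrib sum_subtractf)
qed

lemma variance_decomposition:
  fixes a :: "'t \<Rightarrow> real"
  defines "\<phi> \<equiv> fiber_mean A w Z a"
  shows "(\<Sum>T\<in>A. w T * (a T - \<phi> (Z T))\<^sup>2) = (\<Sum>T\<in>A. w T * (a T)\<^sup>2) - (\<Sum>T\<in>A. w T * (\<phi> (Z T))\<^sup>2)"
  using covariance_decomposition[of a a] by (simp add: \<phi>_def power2_eq_square mult.assoc)

lemma sum_fiber_mean_sq_le:
  "(\<Sum>T\<in>A. w T * (fiber_mean A w Z a (Z T))\<^sup>2) \<le> (\<Sum>T\<in>A. w T * (a T)\<^sup>2)"
proof -
  have "0 \<le> (\<Sum>T\<in>A. w T * (a T - fiber_mean A w Z a (Z T))\<^sup>2)"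
    using pos by (intro sum_nonneg) (simp add: less_imp_le)
  then show ?thesis unfolding variance_decomposition by simp
qed

lemma sum_centered_sq_le:
  "(\<Sum>T\<in>A. w T * (a T - fiber_mean A w Z a (Z T))\<^sup>2) \<le> (\<Sum>T\<in>A. w T * (a T)\<^sup>2)"
  unfolding variance_decomposition using pos by (auto intro!: sum_nonneg simp: less_imp_le)

lemma sum_fiber_mean:
  "(\<Sum>T\<in>A. w T * fiber_mean A w Z a (Z T)) = (\<Sum>T\<in>A. w T * a T)"
  using fiber_mean_tower[of a "\<lambda>_. 1"] by simp

lemma sum_fiber_covariance_le:
  fixes X :: "'t \<Rightarrow> 'x" and Y :: "'t \<Rightarrow> 'y" and f :: "'x \<Rightarrow> real" and g :: "'y \<Rightarrow> real"
  assumes fibers: "\<forall>z\<in>Z ` A. max_corr_le {T\<in>A. Z T = z} w X Y c" and "0 \<le> c"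
  defines "\<phi> \<equiv> fiber_mean A w Z (\<lambda>T. f (X T))" and "\<psi> \<equiv> fiber_mean A w Z (\<lambda>T. g (Y T))"
  shows "(\<Sum>T\<in>A. w T * (f (X T) - \<phi> (Z T)) * (g (Y T) - \<psi> (Z T)))
    \<le> c * sqrt (\<Sum>T\<in>A. w T * (f (X T) - \<phi> (Z T))\<^sup>2) * sqrt (\<Sum>T\<in>A. w T * (g (Y T) - \<psi> (Z T))\<^sup>2)"
proof -
  define a where "a z = (\<Sum>T\<in>{T\<in>A. Z T = z}. w T * (f (X T) - \<phi> z)\<^sup>2)" for z
  define b where "b z = (\<Sum>T\<in>{T\<in>A. Z T = z}. w T * (g (Y T) - \<psi> z)\<^sup>2)" for z
  have ab: "0 \<le> a z" "0 \<le> b z" for z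
    using pos by (auto simp: a_def b_def intro!: sum_nonneg simp: less_imp_le)
  have "(\<Sum>T\<in>{T\<in>A. Z T = z}. w T * (f (X T) - \<phi> (Z T)) * (g (Y T) - \<psi> (Z T)))
      \<le> c * (sqrt (a z) * sqrt (b z))" if z: "z \<in> Z ` A" for z
  proof -
    have "(\<Sum>T\<in>{T\<in>A. Z T = z}. w T * (f (X T) - \<phi> z) * (g (Y T) - \<psi> z)) \<le> c * sqrt (a z) * sqrt (b z)"
      using max_corr_leD[OF fibers[rule_format, OF z], of "\<lambda>x. f x - \<phi> z" "\<lambda>y. g y - \<psi> z"]
        fiber_mean_centered[OF z] by (simp add: a_def b_def \<phi>_def \<psi>_def)
    moreover have "(\<Sum>T\<in>{T\<in>A. Z T = z}. w T * (f (X T) - \<phi> (Z T)) * (g (Y T) - \<psi> (Z T)))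
        = (\<Sum>T\<in>{T\<in>A. Z T = z}. w T * (f (X T) - \<phi> z) * (g (Y T) - \<psi> z))"
      by (intro sum.cong) auto
    ultimately show ?thesis by (simp add: mult.assoc)
  qed
  then have "(\<Sum>T\<in>A. w T * (f (X T) - \<phi> (Z T)) * (g (Y T) - \<psi> (Z T)))
      \<le> (\<Sum>z\<in>Z ` A. c * (sqrt (a z) * sqrt (b z)))"
    unfolding sum_by_fibers[of "\<lambda>T. w T * (f (X T) - \<phi> (Z T)) * (g (Y T) - \<psi> (Z T))"]
    by (rule sum_mono)
  also have "\<dots> \<le> c * (sqrt (\<Sum>z\<in>Z ` A. a z) * sqrt (\<Sum>z\<in>Z ` A. b z))"
    unfolding sum_distrib_left[symmetric] using ab \<open>0 \<le> c\<close>
    by (intro mult_left_mono sum_sqrt_mult_le) auto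
  also have "(\<Sum>z\<in>Z ` A. a z) = (\<Sum>T\<in>A. w T * (f (X T) - \<phi> (Z T))\<^sup>2)"
    unfolding sum_by_fibers[of "\<lambda>T. w T * (f (X T) - \<phi> (Z T))\<^sup>2"] a_def by (intro sum.cong refl) auto
  also have "(\<Sum>z\<in>Z ` A. b z) = (\<Sum>T\<in>A. w T * (g (Y T) - \<psi> (Z T))\<^sup>2)"
    unfolding sum_by_fibers[of "\<lambda>T. w T * (g (Y T) - \<psi> (Z T))\<^sup>2"] b_def by (intro sum.cong refl) auto
  finally show ?thesis by (simp add: mult.assoc)
qed


lemma max_corr_le_add:
  assumes fibers: "\<forall>z\<in>Z ` A. max_corr_le {T\<in>A. Z T = z} w X Y c1"
    and coarse: "max_corr_le A w Z Y c2" and "0 \<le> c1" "0 \<le> c2"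
  shows "max_corr_le A w X Y (c1 + c2)"
  unfolding max_corr_le_def
proof (intro allI impI)
  fix f g
  assume cf: "(\<Sum>T\<in>A. w T * f (X T)) = 0" and cg: "(\<Sum>T\<in>A. w T * g (Y T)) = 0"
  define \<phi> where "\<phi> = fiber_mean A w Z (\<lambda>T. f (X T))"
  define \<psi> where "\<psi> = fiber_mean A w Z (\<lambda>T. g (Y T))"
  let ?a = "\<Sum>T\<in>A. w T * (f (X T))\<^sup>2" and ?b = "\<Sum>T\<in>A. w T * (g (Y T))\<^sup>2"
  have w: "\<forall>T\<in>A. 0 \<le> w T" using pos by (simp add: less_imp_le)
  have "(\<Sum>T\<in>A. w T * (f (X T) - \<phi> (Z T)) * (g (Y T) - \<psi> (Z T)))
      \<le> c1 * sqrt (\<Sum>T\<in>A. w T * (f (X T) - \<phi> (Z T))\<^sup>2) * sqrt (\<Sum>T\<in>A. w T * (g (Y T) - \<psi> (Z T))\<^sup>2)"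
    unfolding \<phi>_def \<psi>_def by (rule sum_fiber_covariance_le[OF fibers \<open>0 \<le> c1\<close>])
  also have "\<dots> \<le> c1 * sqrt ?a * sqrt ?b"
    using \<open>0 \<le> c1\<close> w sum_centered_sq_le[of "\<lambda>T. f (X T)"] sum_centered_sq_le[of "\<lambda>T. g (Y T)"]
    unfolding \<phi>_def \<psi>_def
    by (intro mult_mono mult_left_mono real_sqrt_le_mono mult_nonneg_nonneg real_sqrt_ge_zero sum_nonneg)
      auto
  finally have fiber_part: "(\<Sum>T\<in>A. w T * (f (X T) - \<phi> (Z T)) * (g (Y T) - \<psi> (Z T)))
      \<le> c1 * sqrt ?a * sqrt ?b" .
  have "(\<Sum>T\<in>A. w T * \<phi> (Z T) * \<psi> (Z T)) = (\<Sum>T\<in>A. w T * \<phi> (Z T) * g (Y T))"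
    using fiber_mean_tower[of "\<lambda>T. g (Y T)" \<phi>] by (simp add: \<psi>_def mult_ac)
  also have "\<dots> \<le> c2 * sqrt (\<Sum>T\<in>A. w T * (\<phi> (Z T))\<^sup>2) * sqrt ?b"
    using max_corr_leD[OF coarse, of \<phi> g] sum_fiber_mean[of "\<lambda>T. f (X T)"] cf cg
    by (simp add: \<phi>_def)
  also have "\<dots> \<le> c2 * sqrt ?a * sqrt ?b"
    using \<open>0 \<le> c2\<close> w sum_fiber_mean_sq_le[of "\<lambda>T. f (X T)"] unfolding \<phi>_def
    by (intro mult_right_mono mult_left_mono real_sqrt_le_mono real_sqrt_ge_zero sum_nonneg) auto
  finally have coarse_part: "(\<Sum>T\<in>A. w T * \<phi> (Z T) * \<psi> (Z T)) \<le> c2 * sqrt ?a * sqrt ?b" .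
  show "(\<Sum>T\<in>A. w T * f (X T) * g (Y T)) \<le> (c1 + c2) * sqrt ?a * sqrt ?b"
    using fiber_part coarse_part
    unfolding covariance_decomposition[of "\<lambda>T. f (X T)" "\<lambda>T. g (Y T)"] \<phi>_def \<psi>_def
    by (simp add: algebra_simps)
qed

text \<open>Conditioning on \<open>Z\<close> contracts: \<open>\<Sum> w m(Z)\<^sup>2 = \<Sum> w h(V) m(Z)\<close> by the tower property,
  and the right-hand side is a correlation between functions of \<open>V\<close> and \<open>Z\<close>.\<close>
lemma sqrt_sum_fiber_mean_sq_le:
  assumes VZ: "max_corr_le A w V Z \<sigma>" and "0 \<le> \<sigma>" and centered: "(\<Sum>T\<in>A. w T * h (V T)) = 0"
  shows "sqrt (\<Sum>T\<in>A. w T * (fiber_mean A w Z (\<lambda>T. h (V T)) (Z T))\<^sup>2)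
    \<le> \<sigma> * sqrt (\<Sum>T\<in>A. w T * (h (V T))\<^sup>2)"
proof (rule sqrt_le_if_le_mult_sqrt)
  let ?m = "fiber_mean A w Z (\<lambda>T. h (V T))"
  have "(\<Sum>T\<in>A. w T * (?m (Z T))\<^sup>2) = (\<Sum>T\<in>A. w T * h (V T) * ?m (Z T))"
    using fiber_mean_tower[of "\<lambda>T. h (V T)" ?m] by (simp add: power2_eq_square mult.assoc)
  also have "\<dots> \<le> \<sigma> * sqrt (\<Sum>T\<in>A. w T * (h (V T))\<^sup>2) * sqrt (\<Sum>T\<in>A. w T * (?m (Z T))\<^sup>2)"
    using max_corr_leD[OF VZ centered, of ?m] sum_fiber_mean[of "\<lambda>T. h (V T)"] centered by simp
  finally show "(\<Sum>T\<in>A. w T * (?m (Z T))\<^sup>2)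
      \<le> \<sigma> * sqrt (\<Sum>T\<in>A. w T * (h (V T))\<^sup>2) * sqrt (\<Sum>T\<in>A. w T * (?m (Z T))\<^sup>2)" .
qed (use pos \<open>0 \<le> \<sigma>\<close> in \<open>auto intro!: sum_nonneg simp: less_imp_le\<close>)

lemma max_corr_le_trickle:
  assumes fibers: "\<forall>z\<in>Z ` A. max_corr_le {T\<in>A. Z T = z} w X Y \<gamma>"
    and XZ: "max_corr_le A w X Z \<sigma>" and YZ: "max_corr_le A w Y Z \<sigma>"
    and "0 \<le> \<gamma>" "\<gamma> \<le> 1" "0 \<le> \<sigma>"
  shows "max_corr_le A w X Y (\<gamma> + (1 - \<gamma>) * \<sigma>\<^sup>2)"
  unfolding max_corr_le_def
proof (intro allI impI)
  fix f g
  assume cf: "(\<Sum>T\<in>A. w T * f (X T)) = 0" and cg: "(\<Sum>T\<in>A. w T * g (Y T)) = 0"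
  have w: "\<forall>T\<in>A. 0 \<le> w T" using pos by (simp add: less_imp_le)
  define \<phi> where "\<phi> = fiber_mean A w Z (\<lambda>T. f (X T))"
  define \<psi> where "\<psi> = fiber_mean A w Z (\<lambda>T. g (Y T))"
  define a b \<Phi> \<Psi> where "a = (\<Sum>T\<in>A. w T * (f (X T))\<^sup>2)" and "b = (\<Sum>T\<in>A. w T * (g (Y T))\<^sup>2)"
    and "\<Phi> = (\<Sum>T\<in>A. w T * (\<phi> (Z T))\<^sup>2)" and "\<Psi> = (\<Sum>T\<in>A. w T * (\<psi> (Z T))\<^sup>2)"
  have "(\<Sum>T\<in>A. w T * (f (X T) - \<phi> (Z T)) * (g (Y T) - \<psi> (Z T)))
      \<le> \<gamma> * sqrt (a - \<Phi>) * sqrt (b - \<Psi>)"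
    using sum_fiber_covariance_le[OF fibers \<open>0 \<le> \<gamma>\<close>, of f g]
    unfolding \<phi>_def \<psi>_def a_def b_def \<Phi>_def \<Psi>_def variance_decomposition .
  moreover have "(\<Sum>T\<in>A. w T * \<phi> (Z T) * \<psi> (Z T)) \<le> sqrt \<Phi> * sqrt \<Psi>"
    unfolding \<Phi>_def \<Psi>_def using w by (rule weighted_Cauchy_Schwarz)
  moreover have "\<gamma> * sqrt (a - \<Phi>) * sqrt (b - \<Psi>) + sqrt \<Phi> * sqrt \<Psi>
      \<le> (\<gamma> + (1 - \<gamma>) * \<sigma>\<^sup>2) * sqrt a * sqrt b"
  proof (rule sqrt_mult_interpolate_le)
    show "sqrt \<Phi> \<le> \<sigma> * sqrt a" "sqrt \<Psi> \<le> \<sigma> * sqrt b"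
      unfolding \<Phi>_def \<Psi>_def a_def b_def \<phi>_def \<psi>_def
      using sqrt_sum_fiber_mean_sq_le[OF XZ \<open>0 \<le> \<sigma>\<close> cf] sqrt_sum_fiber_mean_sq_le[OF YZ \<open>0 \<le> \<sigma>\<close> cg] .
    show "0 \<le> \<Phi>" "0 \<le> \<Psi>" unfolding \<Phi>_def \<Psi>_def using w by (auto intro!: sum_nonneg)
    show "\<Phi> \<le> a" "\<Psi> \<le> b" unfolding \<Phi>_def \<Psi>_def a_def b_def \<phi>_def \<psi>_def
      by (rule sum_fiber_mean_sq_le)+
  qed (use assms in auto)
  ultimately show "(\<Sum>T\<in>A. w T * f (X T) * g (Y T)) \<le> (\<gamma> + (1 - \<gamma>) * \<sigma>\<^sup>2) * sqrt a * sqrt b"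
    unfolding covariance_decomposition[of "\<lambda>T. f (X T)" "\<lambda>T. g (Y T)"] \<phi>_def \<psi>_def
    by linarith
qed

end

section \<open>Quadratic form of a reversible random walk\<close>

definition bilinear_form :: "'a set \<Rightarrow> ('a \<Rightarrow> 'a \<Rightarrow> real) \<Rightarrow> ('a \<Rightarrow> real) \<Rightarrow> ('a \<Rightarrow> real) \<Rightarrow> real" where
  "bilinear_form L a x y = (\<Sum>v\<in>L. \<Sum>u\<in>L. a v u * x u * y v)"

lemma bilinear_form_add_scaled:
  "bilinear_form L a (\<lambda>v. x v + t * q v) (\<lambda>v. x v + t * q v)
     = bilinear_form L a x x + t * (bilinear_form L a q x + bilinear_form L a x q)
       + t\<^sup>2 * bilinear_form L a q q"
  by (simp add: bilinear_form_def algebra_simps power2_eq_square sum.distrib sum_distrib_left)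

lemma bilinear_form_sym:
  assumes "\<forall>u\<in>L. \<forall>v\<in>L. a u v = a v u"
  shows "bilinear_form L a x y = bilinear_form L a y x"
proof -
  have "bilinear_form L a x y = (\<Sum>u\<in>L. \<Sum>v\<in>L. a v u * x u * y v)"
    unfolding bilinear_form_def by (rule sum.swap)
  also have "\<dots> = bilinear_form L a y x"
    unfolding bilinear_form_def using assms by (intro sum.cong refl) (auto simp: mult_ac)
  finally show ?thesis .
qed

context
  fixes L :: "'a set" and p :: "'a \<Rightarrow> real"
  assumes finite: "finite L" and pos: "\<forall>v\<in>L. 0 < p v"
begin

lemma sum_weighted_sq_eq_0_iff: "(\<Sum>v\<in>L. p v * (f v)\<^sup>2) = 0 \<longleftrightarrow> (\<forall>v\<in>L. f v = 0)"
proof -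
  have "(\<Sum>v\<in>L. p v * (f v)\<^sup>2) = 0 \<longleftrightarrow> (\<forall>v\<in>L. p v * (f v)\<^sup>2 = 0)"
    using finite pos by (intro sum_nonneg_eq_0_iff) (auto simp: less_imp_le)
  also have "\<dots> \<longleftrightarrow> (\<forall>v\<in>L. f v = 0)" using pos by (auto simp: less_le)
  finally show ?thesis .
qed

lemma sum_weighted_sq_nonneg: "0 \<le> (\<Sum>v\<in>L. p v * (f v)\<^sup>2)"
  using pos by (auto intro!: sum_nonneg simp: less_imp_le)

lemma compact_weighted_unit_sphere:
  "compact {f. (\<forall>v. v \<notin> L \<longrightarrow> f v = 0) \<and> (\<Sum>v\<in>L. p v * f v) = 0 \<and> (\<Sum>v\<in>L. p v * (f v)\<^sup>2) = 1}"
  (is "compact ?C")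
proof -
  define K where "K v = (if v \<in> L then {- sqrt (1 / p v) .. sqrt (1 / p v)} else {0::real})" for v
  have box: "compact (Pi UNIV K)"
  proof -
    have "compactin (product_topology (\<lambda>_. euclidean) UNIV) (PiE UNIV K)"
      by (simp add: compactin_PiE K_def)
    then show ?thesis by (simp add: euclidean_product_topology PiE_UNIV_domain)
  qed
  have supp: "closed {f::'a \<Rightarrow> real. \<forall>v. v \<notin> L \<longrightarrow> f v = 0}"
  proof -
    have "{f::'a \<Rightarrow> real. \<forall>v. v \<notin> L \<longrightarrow> f v = 0} = (\<Inter>v\<in>-L. {f. f v = 0})" by auto
    also have "closed \<dots>" by (intro closed_INT ballI closed_Collect_eq) simp_all
    finally show ?thesis .
  qed
  have mean: "closed {f::'a \<Rightarrow> real. (\<Sum>v\<in>L. p v * f v) = 0}"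
    by (intro closed_Collect_eq continuous_intros continuous_on_product_then_coordinatewise
        continuous_on_id)
  have norm: "closed {f::'a \<Rightarrow> real. (\<Sum>v\<in>L. p v * (f v)\<^sup>2) = 1}"
    by (intro closed_Collect_eq continuous_intros continuous_on_product_then_coordinatewise
        continuous_on_id)
  have "?C \<subseteq> Pi UNIV K"
  proof (intro subsetI Pi_I)
    fix f v assume f: "f \<in> ?C"
    show "f v \<in> K v"
    proof (cases "v \<in> L")
      case True
      have "p v * (f v)\<^sup>2 \<le> (\<Sum>v\<in>L. p v * (f v)\<^sup>2)"
        using finite True pos by (intro member_le_sum) (auto simp: less_imp_le)
      then have "(f v)\<^sup>2 \<le> 1 / p v" using f True pos by (simp add: field_simps)
      then have "sqrt ((f v)\<^sup>2) \<le> sqrt (1 / p v)" by (rule real_sqrt_le_mono)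
      then show ?thesis using True by (simp add: K_def abs_le_iff)
    qed (use f in \<open>simp add: K_def\<close>)
  qed
  then have C_eq: "?C = Pi UNIV K \<inter> ({f. \<forall>v. v \<notin> L \<longrightarrow> f v = 0}
      \<inter> {f. (\<Sum>v\<in>L. p v * f v) = 0} \<inter> {f. (\<Sum>v\<in>L. p v * (f v)\<^sup>2) = 1})"
    by auto
  show ?thesis
    unfolding C_eq by (rule compact_Int_closed[OF box closed_Int[OF closed_Int[OF supp mean] norm]])
qed

lemma bilinear_form_eq_0_if_vanishing: "\<forall>v\<in>L. f v = 0 \<Longrightarrow> bilinear_form L a f f = 0"
  by (simp add: bilinear_form_def)

lemma exists_rayleigh_maximizer:
  assumes "(\<Sum>v\<in>L. p v * h v) = 0" "(\<Sum>v\<in>L. p v * (h v)\<^sup>2) \<noteq> 0"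
  shows "\<exists>h0. (\<Sum>v\<in>L. p v * h0 v) = 0 \<and> (\<Sum>v\<in>L. p v * (h0 v)\<^sup>2) = 1 \<and>
    (\<forall>f. (\<Sum>v\<in>L. p v * f v) = 0 \<longrightarrow>
       bilinear_form L a f f \<le> bilinear_form L a h0 h0 * (\<Sum>v\<in>L. p v * (f v)\<^sup>2))"
proof -
  let ?M = "\<lambda>f. \<Sum>v\<in>L. p v * f v" and ?N = "\<lambda>f. \<Sum>v\<in>L. p v * (f v)\<^sup>2"
  let ?C = "{f. (\<forall>v. v \<notin> L \<longrightarrow> f v = 0) \<and> ?M f = 0 \<and> ?N f = 1}"
  define normalize where "normalize f v = (if v \<in> L then f v / sqrt (?N f) else 0)" for f v
  have normalize_in: "normalize f \<in> ?C" if "?M f = 0" "?N f \<noteq> 0" for f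
  proof -
    have N: "?N f > 0" using sum_weighted_sq_nonneg[of f] that(2) by linarith
    have "?N (normalize f) = (\<Sum>v\<in>L. p v * (f v)\<^sup>2 / ?N f)"
      unfolding normalize_def using N by (intro sum.cong) (auto simp: power_divide)
    also have "\<dots> = 1" using N by (simp add: sum_divide_distrib[symmetric])
    finally have "?N (normalize f) = 1" .
    moreover have "?M (normalize f) = ?M f / sqrt (?N f)"
      unfolding normalize_def by (simp add: sum_divide_distrib)
    ultimately show ?thesis using that(1) by (simp add: normalize_def)
  qed
  have bilinear_normalize: "bilinear_form L a (normalize f) (normalize f) = bilinear_form L a f f / ?N f" for f
    unfolding bilinear_form_def normalize_def using sum_weighted_sq_nonneg[of f]
    by (simp add: sum_divide_distrib power2_eq_square[symmetric])
  have cont: "continuous_on ?C (\<lambda>f. bilinear_form L a f f)"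
    unfolding bilinear_form_def
    by (intro continuous_intros continuous_on_product_then_coordinatewise continuous_on_id)
  have "normalize h \<in> ?C" by (rule normalize_in[OF assms])
  then have ne: "?C \<noteq> {}" by auto
  from continuous_attains_sup[OF compact_weighted_unit_sphere ne cont]
  obtain h0 where h0: "h0 \<in> ?C" and max: "\<forall>f\<in>?C. bilinear_form L a f f \<le> bilinear_form L a h0 h0"
    ..
  have maximal: "bilinear_form L a f f \<le> bilinear_form L a h0 h0 * ?N f" if "?M f = 0" for f
  proof (cases "?N f = 0")
    case True
    then show ?thesis using bilinear_form_eq_0_if_vanishing sum_weighted_sq_eq_0_iff by simp
  next
    case False
    then have N: "?N f > 0" using sum_weighted_sq_nonneg[of f] by linarith
    have "bilinear_form L a (normalize f) (normalize f) \<le> bilinear_form L a h0 h0"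
      using max normalize_in[OF that False] by (rule bspec)
    then have "bilinear_form L a f f / ?N f \<le> bilinear_form L a h0 h0"
      by (simp only: bilinear_normalize)
    with N show ?thesis by (simp add: divide_le_eq)
  qed
  moreover have "?M h0 = 0 \<and> ?N h0 = 1" using h0 by simp
  ultimately show ?thesis by (intro exI[of _ h0]) simp
qed

text \<open>For centered \<open>q\<close> the quadratic \<open>t \<mapsto> B(h0 + t q) - \<theta> N(h0 + t q)\<close> is nonpositive, so
  its linear coefficient vanishes.\<close>
lemma rayleigh_maximizer_first_variation:
  assumes sym: "\<forall>u\<in>L. \<forall>v\<in>L. a u v = a v u"
    and centered: "(\<Sum>v\<in>L. p v * h0 v) = 0" and unit: "(\<Sum>v\<in>L. p v * (h0 v)\<^sup>2) = 1"
    and max: "\<And>f. (\<Sum>v\<in>L. p v * f v) = 0 \<Longrightarrow>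
       bilinear_form L a f f \<le> bilinear_form L a h0 h0 * (\<Sum>v\<in>L. p v * (f v)\<^sup>2)"
    and q: "(\<Sum>v\<in>L. p v * q v) = 0"
  shows "bilinear_form L a h0 q = bilinear_form L a h0 h0 * (\<Sum>v\<in>L. p v * h0 v * q v)"
proof -
  define \<theta> where "\<theta> = bilinear_form L a h0 h0"
  define S where "S = (\<Sum>v\<in>L. p v * h0 v * q v)"
  let ?M = "\<lambda>f. \<Sum>v\<in>L. p v * f v" and ?N = "\<lambda>f. \<Sum>v\<in>L. p v * (f v)\<^sup>2"
  have "(2 * (bilinear_form L a h0 q - \<theta> * S)) * t + (bilinear_form L a q q - \<theta> * ?N q) * t\<^sup>2 \<le> 0"
    for t
  proof -
    have "?M (\<lambda>v. h0 v + t * q v) = ?M h0 + t * ?M q"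
      by (simp add: algebra_simps sum.distrib sum_distrib_left)
    then have "bilinear_form L a (\<lambda>v. h0 v + t * q v) (\<lambda>v. h0 v + t * q v)
        \<le> \<theta> * ?N (\<lambda>v. h0 v + t * q v)"
      using max centered q by (simp add: \<theta>_def)
    moreover have "?N (\<lambda>v. h0 v + t * q v) = ?N h0 + t * (2 * S) + t\<^sup>2 * ?N q"
    proof -
      have "?N (\<lambda>v. h0 v + t * q v)
          = (\<Sum>v\<in>L. p v * (h0 v)\<^sup>2 + t * (2 * (p v * h0 v * q v)) + t\<^sup>2 * (p v * (q v)\<^sup>2))"
        by (intro sum.cong refl) (simp add: algebra_simps power2_eq_square)
      then show ?thesis by (simp add: S_def sum.distrib sum_distrib_left)
    qed
    ultimately have "\<theta> + t * (2 * bilinear_form L a h0 q) + t\<^sup>2 * bilinear_form L a q q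
        \<le> \<theta> * (1 + t * (2 * S) + t\<^sup>2 * ?N q)"
      unfolding bilinear_form_add_scaled bilinear_form_sym[OF sym, of q h0] unit \<theta>_def[symmetric]
      by simp
    then show ?thesis by (simp add: algebra_simps)
  qed
  then have "2 * (bilinear_form L a h0 q - \<theta> * S) = 0" by (rule linear_coeff_eq_0_if_quadratic_nonpos)
  then show ?thesis by (simp add: S_def \<theta>_def)
qed

text \<open>\<open>K h0 - \<theta> h0\<close> is centered, hence orthogonal to itself by the first variation.\<close>
lemma rayleigh_maximizer_eigenvector:
  assumes sym: "\<forall>u\<in>L. \<forall>v\<in>L. a u v = a v u"
    and rows: "\<forall>v\<in>L. (\<Sum>u\<in>L. a v u) = p v"
    and walk: "\<And>f v. v \<in> L \<Longrightarrow> p v * K f v = (\<Sum>u\<in>L. a v u * f u)"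
    and centered: "(\<Sum>v\<in>L. p v * h0 v) = 0" and unit: "(\<Sum>v\<in>L. p v * (h0 v)\<^sup>2) = 1"
    and max: "\<And>f. (\<Sum>v\<in>L. p v * f v) = 0 \<Longrightarrow>
       bilinear_form L a f f \<le> bilinear_form L a h0 h0 * (\<Sum>v\<in>L. p v * (f v)\<^sup>2)"
  shows "\<forall>v\<in>L. K h0 v = bilinear_form L a h0 h0 * h0 v"
proof -
  define \<theta> where "\<theta> = bilinear_form L a h0 h0"
  let ?M = "\<lambda>f. \<Sum>v\<in>L. p v * f v" and ?N = "\<lambda>f. \<Sum>v\<in>L. p v * (f v)\<^sup>2"
  define e where "e v = K h0 v - \<theta> * h0 v" for v
  have "?M (\<lambda>v. K h0 v) = (\<Sum>v\<in>L. \<Sum>u\<in>L. a v u * h0 u)"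
    using walk by (intro sum.cong) auto
  also have "\<dots> = (\<Sum>u\<in>L. \<Sum>v\<in>L. a v u * h0 u)" by (rule sum.swap)
  also have "\<dots> = (\<Sum>u\<in>L. (\<Sum>v\<in>L. a u v) * h0 u)"
    using sym by (intro sum.cong refl) (auto simp: sum_distrib_right)
  also have "\<dots> = ?M h0" using rows by (intro sum.cong) auto
  finally have "?M (\<lambda>v. K h0 v) = 0" using centered by simp
  moreover have "?M e = ?M (\<lambda>v. K h0 v) - \<theta> * ?M h0"
    by (simp add: e_def right_diff_distrib sum_subtractf sum_distrib_left mult.left_commute)
  ultimately have "?M e = 0" using centered by simp
  have "bilinear_form L a h0 e = (\<Sum>v\<in>L. (\<Sum>u\<in>L. a v u * h0 u) * e v)"
    unfolding bilinear_form_def by (simp add: sum_distrib_right)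
  also have "\<dots> = (\<Sum>v\<in>L. p v * K h0 v * e v)"
    using walk by (intro sum.cong) auto
  finally have "bilinear_form L a h0 e = (\<Sum>v\<in>L. p v * K h0 v * e v)" .
  then have "(\<Sum>v\<in>L. p v * K h0 v * e v) - \<theta> * (\<Sum>v\<in>L. p v * h0 v * e v) = 0"
    using rayleigh_maximizer_first_variation[OF sym centered unit max \<open>?M e = 0\<close>] by (simp add: \<theta>_def)
  moreover have "?N e = (\<Sum>v\<in>L. p v * K h0 v * e v) - \<theta> * (\<Sum>v\<in>L. p v * h0 v * e v)"
  proof -
    have "?N e = (\<Sum>v\<in>L. p v * K h0 v * e v - \<theta> * (p v * h0 v * e v))"
      by (intro sum.cong refl) (simp add: e_def power2_eq_square algebra_simps)
    then show ?thesis by (simp add: sum_subtractf sum_distrib_left)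
  qed
  ultimately show ?thesis using sum_weighted_sq_eq_0_iff[of e] by (simp add: e_def \<theta>_def)
qed

lemma reversible_walk_form_le:
  assumes sym: "\<forall>u\<in>L. \<forall>v\<in>L. a u v = a v u"
    and rows: "\<forall>v\<in>L. (\<Sum>u\<in>L. a v u) = p v"
    and walk: "\<And>f v. v \<in> L \<Longrightarrow> p v * K f v = (\<Sum>u\<in>L. a v u * f u)"
    and eigenvalues: "\<And>f \<theta>. \<exists>v\<in>L. f v \<noteq> 0 \<Longrightarrow> (\<Sum>v\<in>L. p v * f v) = 0 \<Longrightarrow>
       \<forall>v\<in>L. K f v = \<theta> * f v \<Longrightarrow> \<theta> \<le> \<mu>"
    and centered: "(\<Sum>v\<in>L. p v * h v) = 0"
  shows "bilinear_form L a h h \<le> \<mu> * (\<Sum>v\<in>L. p v * (h v)\<^sup>2)"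
proof (cases "(\<Sum>v\<in>L. p v * (h v)\<^sup>2) = 0")
  case True
  then show ?thesis using bilinear_form_eq_0_if_vanishing sum_weighted_sq_eq_0_iff by simp
next
  case False
  obtain h0 where h0: "(\<Sum>v\<in>L. p v * h0 v) = 0" "(\<Sum>v\<in>L. p v * (h0 v)\<^sup>2) = 1"
    and max: "\<And>f. (\<Sum>v\<in>L. p v * f v) = 0 \<Longrightarrow>
       bilinear_form L a f f \<le> bilinear_form L a h0 h0 * (\<Sum>v\<in>L. p v * (f v)\<^sup>2)"
    using exists_rayleigh_maximizer[where a=a, OF centered False] by blast
  have "\<exists>v\<in>L. h0 v \<noteq> 0" using h0(2) sum_weighted_sq_eq_0_iff[of h0] by auto
  then have "bilinear_form L a h0 h0 \<le> \<mu>"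
    using h0(1) rayleigh_maximizer_eigenvector[OF sym rows walk h0 max] by (rule eigenvalues)
  then show ?thesis
    using max[OF centered] sum_weighted_sq_nonneg[of h] by (meson mult_right_mono order_trans)
qed

end

section \<open>Colored walks of partite complexes\<close>

locale partite_complex =
  fixes d :: nat and F :: "'a set set" and w :: "'a set \<Rightarrow> real" and col :: "'a \<Rightarrow> nat"
  assumes weighted: "weighted_complex d F w" and partite: "partite d F col"
begin

definition col_part :: "nat set \<Rightarrow> 'a set \<Rightarrow> 'a set" where
  "col_part S T = {v\<in>T. col v \<in> S}"

definition tops :: "'a set \<Rightarrow> 'a set set" where
  "tops s = {T\<in>F. s \<subseteq> T}"

definition weight :: "'a set \<Rightarrow> real" where
  "weight s = (\<Sum>T\<in>tops s. w T)"

text \<open>The \<open>(I, J)\<close>-colored walk in the link of \<open>s\<close> has expansion at most \<open>c\<close>.\<close>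
abbreviation link_corr_le :: "'a set \<Rightarrow> nat set \<Rightarrow> nat set \<Rightarrow> real \<Rightarrow> bool" where
  "link_corr_le s I J c \<equiv> max_corr_le (tops s) w (col_part I) (col_part J) c"

lemma finite_F: "finite F" and card_top: "T \<in> F \<Longrightarrow> card T = d + 1"
  and w_pos: "T \<in> F \<Longrightarrow> 0 < w T" and sum_w: "(\<Sum>T\<in>F. w T) = 1"
  using weighted by (auto simp: weighted_complex_def)

lemma finite_top: "T \<in> F \<Longrightarrow> finite T"
  using card_top[of T] by (cases "finite T") auto

lemma inj_on_col: "T \<in> F \<Longrightarrow> inj_on col T" and col_top: "T \<in> F \<Longrightarrow> col ` T = {0..d}"
  using partite by (auto simp: partite_def)

lemma finite_tops: "finite (tops s)"
  using finite_F by (simp add: tops_def)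

lemma tops_w_pos: "\<forall>T\<in>tops s. 0 < w T"
  by (simp add: tops_def w_pos)

lemma weight_pos: "tops s \<noteq> {} \<Longrightarrow> 0 < weight s"
  unfolding weight_def using finite_tops tops_w_pos by (intro sum_pos) auto

lemma subset_top_iff_col_part:
  assumes T: "T \<in> F" and u: "col ` u = S"
  shows "u \<subseteq> T \<longleftrightarrow> col_part S T = u"
proof
  assume "u \<subseteq> T"
  have "v \<in> u" if v: "v \<in> T" "col v \<in> S" for v
  proof -
    obtain v' where "v' \<in> u" "col v' = col v" using u v(2) by force
    with \<open>u \<subseteq> T\<close> v(1) inj_on_col[OF T] show ?thesis by (auto dest: inj_onD)
  qed
  with \<open>u \<subseteq> T\<close> u show "col_part S T = u" by (auto simp: col_part_def)
qed (auto simp: col_part_def)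

lemma col_col_part: "T \<in> F \<Longrightarrow> S \<subseteq> {0..d} \<Longrightarrow> col ` col_part S T = S"
  using col_top[of T] by (auto simp: col_part_def)

lemma col_part_Un: "col_part (I \<union> J) T = col_part I T \<union> col_part J T"
  by (auto simp: col_part_def)

lemma col_part_singleton:
  assumes "T \<in> F" "j \<le> d"
  obtains v where "v \<in> T" "col v = j" "col_part {j} T = {v}"
proof -
  obtain v where v: "v \<in> T" "col v = j" using col_top[OF assms(1)] assms(2) by force
  then have "col_part {j} T = {v}"
    using inj_on_col[OF assms(1)] by (auto simp: col_part_def dest: inj_onD)
  with v that show ?thesis by blast
qed

lemma tops_col_part_eq:
  assumes "col ` u = S"
  shows "{T\<in>tops s. col_part S T = u} = tops (s \<union> u)"
  using subset_top_iff_col_part[OF _ assms] by (auto simp: tops_def)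

lemma tops_empty: "tops {} = F"
  by (simp add: tops_def)

lemma colored_eq_image:
  assumes "S \<subseteq> {0..d}"
  shows "colored F col S = col_part S ` F"
proof
  show "colored F col S \<subseteq> col_part S ` F"
  proof
    fix u assume "u \<in> colored F col S"
    then obtain T where T: "T \<in> F" "u \<subseteq> T" "col ` u = S" by (auto simp: colored_def faces_def)
    then have "u = col_part S T" using subset_top_iff_col_part[of T u S] by simp
    then show "u \<in> col_part S ` F" using T(1) by (rule image_eqI)
  qed
  show "col_part S ` F \<subseteq> colored F col S"
    using col_col_part[OF _ assms] by (auto simp: colored_def faces_def col_part_def)
qed

lemma card_colored:
  assumes "u \<in> colored F col S"
  shows "card u = card S"
proof -
  obtain T where T: "T \<in> F" "u \<subseteq> T" using assms by (auto simp: colored_def faces_def)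
  then have "inj_on col u" using inj_on_col inj_on_subset by blast
  with assms show ?thesis by (auto simp: colored_def dest: card_image)
qed

lemma sum_colored:
  assumes "S \<subseteq> {0..d}"
  shows "(\<Sum>u\<in>colored F col S. weight u * h u) = (\<Sum>T\<in>F. w T * h (col_part S T))"
proof -
  have "(\<Sum>T\<in>F. w T * h (col_part S T))
      = (\<Sum>u\<in>col_part S ` F. \<Sum>T\<in>{T\<in>F. col_part S T = u}. w T * h (col_part S T))"
    by (rule sum.image_gen[OF finite_F])
  also have "\<dots> = (\<Sum>u\<in>colored F col S. weight u * h u)"
  proof (rule sum.cong)
    fix u assume u: "u \<in> colored F col S"
    then have "{T\<in>F. col_part S T = u} = tops u"
      using tops_col_part_eq[of u S "{}"] by (simp add: colored_def tops_empty)
    moreover have "(\<Sum>T\<in>{T\<in>F. col_part S T = u}. w T * h (col_part S T))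
        = (\<Sum>T\<in>{T\<in>F. col_part S T = u}. w T * h u)"
      by (intro sum.cong) auto
    ultimately show "(\<Sum>T\<in>{T\<in>F. col_part S T = u}. w T * h (col_part S T)) = weight u * h u"
      by (simp add: weight_def sum_distrib_right)
  qed (use colored_eq_image[OF assms] in simp)
  finally show ?thesis by simp
qed

lemma col_meas_eq_weight:
  assumes S: "S \<subseteq> {0..d}" and u: "u \<in> colored F col S"
  shows "col_meas d F w col S u = weight u"
proof -
  define C where "C = real ((d + 1) choose card S)"
  have meas: "meas d F w v = weight v / C" if "v \<in> colored F col S" for v
    using card_colored[OF that] by (simp add: meas_def weight_def tops_def C_def)
  have "(\<Sum>v\<in>colored F col S. weight v) = 1"
    using sum_colored[OF S, of "\<lambda>_. 1"] sum_w by simp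
  then have "(\<Sum>v\<in>colored F col S. meas d F w v) = 1 / C"
    using meas by (simp add: sum_divide_distrib[symmetric])
  moreover obtain T where T: "T \<in> F" "u \<subseteq> T" using u by (auto simp: colored_def faces_def)
  then have "card S \<le> d + 1"
    using card_colored[OF u] card_top[OF T(1)] card_mono[OF finite_top[OF T(1)] T(2)] by simp
  then have "C > 0" by (simp add: C_def)
  ultimately show ?thesis using meas[OF u] by (simp add: col_meas_def)
qed

lemma col_inner_eq:
  assumes "S \<subseteq> {0..d}"
  shows "col_inner d F w col S f g = (\<Sum>T\<in>F. w T * f (col_part S T) * g (col_part S T))"
  using sum_colored[OF assms, of "\<lambda>u. f u * g u"] col_meas_eq_weight[OF assms]
  by (simp add: col_inner_def mult.assoc cong: sum.cong)

lemma col_part_image_tops: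
  assumes J: "J \<subseteq> {0..d}" and IJ: "I \<union> J \<subseteq> {0..d}" and s: "s \<in> colored F col I"
  shows "col_part J ` tops s = {t\<in>colored F col J. s \<union> t \<in> colored F col (I \<union> J)}"
proof
  have cs: "col ` s = I" using s by (simp add: colored_def)
  show "col_part J ` tops s \<subseteq> {t\<in>colored F col J. s \<union> t \<in> colored F col (I \<union> J)}"
  proof (rule image_subsetI)
    fix T assume "T \<in> tops s"
    then have T: "T \<in> F" "col_part I T = s"
      using subset_top_iff_col_part[OF _ cs] by (auto simp: tops_def)
    then show "col_part J T \<in> {t\<in>colored F col J. s \<union> t \<in> colored F col (I \<union> J)}"
      using colored_eq_image[OF J] colored_eq_image[OF IJ] col_part_Un[of I J T] by auto
  qed
  show "{t\<in>colored F col J. s \<union> t \<in> colored F col (I \<union> J)} \<subseteq> col_part J ` tops s"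
  proof
    fix t assume t: "t \<in> {t\<in>colored F col J. s \<union> t \<in> colored F col (I \<union> J)}"
    then obtain T where T: "T \<in> F" "s \<union> t \<subseteq> T" by (auto simp: colored_def faces_def)
    moreover have "col ` t = J" using t by (simp add: colored_def)
    ultimately have "t = col_part J T" using subset_top_iff_col_part[of T t J] by simp
    moreover have "T \<in> tops s" using T by (simp add: tops_def)
    ultimately show "t \<in> col_part J ` tops s" by (rule image_eqI)
  qed
qed

lemma sum_col_walk_edges:
  assumes J: "J \<subseteq> {0..d}" and IJ: "I \<union> J \<subseteq> {0..d}" and s: "s \<in> colored F col I"
  shows "(\<Sum>t\<in>{t\<in>colored F col J. s \<union> t \<in> colored F col (I \<union> J)}. col_meas d F w col (I \<union> J) (s \<union> t) * h t)
    = (\<Sum>T\<in>tops s. w T * h (col_part J T))"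
proof -
  have "(\<Sum>T\<in>tops s. w T * h (col_part J T))
      = (\<Sum>t\<in>col_part J ` tops s. \<Sum>T\<in>{T\<in>tops s. col_part J T = t}. w T * h (col_part J T))"
    by (rule sum.image_gen[OF finite_tops])
  also have "\<dots> = (\<Sum>t\<in>{t\<in>colored F col J. s \<union> t \<in> colored F col (I \<union> J)}.
      col_meas d F w col (I \<union> J) (s \<union> t) * h t)"
  proof (rule sum.cong[OF col_part_image_tops[OF J IJ s]])
    fix t assume t: "t \<in> {t\<in>colored F col J. s \<union> t \<in> colored F col (I \<union> J)}"
    then have "{T\<in>tops s. col_part J T = t} = tops (s \<union> t)"
      by (intro tops_col_part_eq) (simp add: colored_def)
    moreover have "col_meas d F w col (I \<union> J) (s \<union> t) = weight (s \<union> t)"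
      using t by (intro col_meas_eq_weight[OF IJ]) simp
    moreover have "(\<Sum>T\<in>{T\<in>tops s. col_part J T = t}. w T * h (col_part J T))
        = (\<Sum>T\<in>{T\<in>tops s. col_part J T = t}. w T * h t)"
      by (intro sum.cong) auto
    ultimately show "(\<Sum>T\<in>{T\<in>tops s. col_part J T = t}. w T * h (col_part J T))
        = col_meas d F w col (I \<union> J) (s \<union> t) * h t"
      by (simp add: weight_def sum_distrib_right)
  qed
  finally show ?thesis by simp
qed

lemma col_walk_eq:
  assumes I: "I \<subseteq> {0..d}" and J: "J \<subseteq> {0..d}" and s: "s \<in> colored F col I"
  shows "col_walk d F w col I J f s = (\<Sum>T\<in>tops s. w T * f (col_part J T)) / weight s"
proof -
  have IJ: "I \<union> J \<subseteq> {0..d}" using I J by simp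
  show ?thesis
    unfolding col_walk_def sum_col_walk_edges[OF J IJ s] using sum_col_walk_edges[OF J IJ s, of "\<lambda>_. 1"]
    by (simp add: weight_def)
qed

lemma col_inner_col_walk:
  assumes I: "I \<subseteq> {0..d}" and J: "J \<subseteq> {0..d}"
  shows "col_inner d F w col I (col_walk d F w col I J f) g
    = (\<Sum>T\<in>F. w T * f (col_part J T) * g (col_part I T))"
proof -
  have "col_inner d F w col I (col_walk d F w col I J f) g
      = (\<Sum>s\<in>colored F col I. (\<Sum>T\<in>tops s. w T * f (col_part J T)) * g s)"
    unfolding col_inner_def
  proof (rule sum.cong[OF refl])
    fix s assume s: "s \<in> colored F col I"
    then have "tops s \<noteq> {}" by (auto simp: colored_def faces_def tops_def)
    with weight_pos have "weight s \<noteq> 0" by (metis less_irrefl)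
    then show "col_meas d F w col I s * col_walk d F w col I J f s * g s
        = (\<Sum>T\<in>tops s. w T * f (col_part J T)) * g s"
      using col_meas_eq_weight[OF I s] col_walk_eq[OF I J s] by simp
  qed
  also have "\<dots> = (\<Sum>s\<in>col_part I ` F. \<Sum>T\<in>{T\<in>F. col_part I T = s}. w T * f (col_part J T) * g (col_part I T))"
  proof (rule sum.cong[OF colored_eq_image[OF I]])
    fix s assume "s \<in> col_part I ` F"
    then have "{T\<in>F. col_part I T = s} = tops s"
      using tops_col_part_eq[of s I "{}"] col_col_part[OF _ I] by (auto simp: tops_empty)
    then show "(\<Sum>T\<in>tops s. w T * f (col_part J T)) * g s
        = (\<Sum>T\<in>{T\<in>F. col_part I T = s}. w T * f (col_part J T) * g (col_part I T))"
      by (auto simp: sum_distrib_right tops_def intro!: sum.cong)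
  qed
  also have "\<dots> = (\<Sum>T\<in>F. w T * f (col_part J T) * g (col_part I T))"
    by (rule sum.image_gen[OF finite_F, symmetric])
  finally show ?thesis .
qed

lemma bip_lambda_le:
  assumes I: "I \<subseteq> {0..d}" and J: "J \<subseteq> {0..d}" and corr: "link_corr_le {} J I c" and "0 \<le> c"
  shows "bip_lambda d F w col I J \<le> ereal c"
  unfolding bip_lambda_def
proof (rule Sup_least, clarify)
  fix f g
  assume "col_norm d F w col J f = 1" "col_norm d F w col I g = 1"
    and "col_inner d F w col J f (\<lambda>_. 1) = 0"
  then have "(\<Sum>T\<in>F. w T * f (col_part J T)) = 0" "(\<Sum>T\<in>F. w T * (f (col_part J T))\<^sup>2) = 1"
    "(\<Sum>T\<in>F. w T * (g (col_part I T))\<^sup>2) = 1"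
    by (simp_all add: col_norm_def col_inner_eq[OF I] col_inner_eq[OF J] power2_eq_square mult.assoc)
  then have "(\<Sum>T\<in>F. w T * f (col_part J T) * g (col_part I T)) \<le> c"
    using corr \<open>0 \<le> c\<close> w_pos sum_w
    by (intro max_corr_le_imp_le[where A=F and w=w]) (auto simp: tops_empty less_imp_le)
  then show "ereal (col_inner d F w col I (col_walk d F w col I J f) g) \<le> ereal c"
    by (simp add: col_inner_col_walk[OF I J])
qed

section \<open>Links\<close>

lemma faces_iff_tops: "x \<in> faces F \<longleftrightarrow> tops x \<noteq> {}"
  by (auto simp: faces_def tops_def)

lemma meas_eq_weight: "meas d F w x = weight x / real ((d + 1) choose card x)"
  by (simp add: meas_def weight_def tops_def)

lemma finite_link_verts: "finite (link_verts F r)"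
proof (rule finite_subset)
  show "link_verts F r \<subseteq> \<Union>F" by (auto simp: link_verts_def faces_def)
  show "finite (\<Union>F)" using finite_F finite_top by auto
qed

lemma sum_link_verts:
  "(\<Sum>u\<in>link_verts F r. \<Sum>T\<in>tops (insert u r). G u T) = (\<Sum>T\<in>tops r. \<Sum>u\<in>T - r. G u T)"
proof -
  have "(\<Sum>u\<in>link_verts F r. \<Sum>T\<in>tops (insert u r). G u T)
      = (\<Sum>T\<in>F. \<Sum>u\<in>{u. u \<in> link_verts F r \<and> insert u r \<subseteq> T}. G u T)"
    unfolding tops_def by (rule sum.swap_restrict[OF finite_link_verts finite_F])
  also have "\<dots> = (\<Sum>T\<in>F. if r \<subseteq> T then (\<Sum>u\<in>T - r. G u T) else 0)"
  proof (rule sum.cong[OF refl])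
    fix T assume "T \<in> F"
    then have "{u. u \<in> link_verts F r \<and> insert u r \<subseteq> T} = (if r \<subseteq> T then T - r else {})"
      by (auto simp: link_verts_def faces_def)
    then show "(\<Sum>u\<in>{u. u \<in> link_verts F r \<and> insert u r \<subseteq> T}. G u T)
        = (if r \<subseteq> T then (\<Sum>u\<in>T - r. G u T) else 0)" by simp
  qed
  also have "\<dots> = (\<Sum>T\<in>tops r. \<Sum>u\<in>T - r. G u T)"
    unfolding tops_def by (rule sum.inter_filter[OF finite_F, symmetric])
  finally show ?thesis .
qed

lemma sum_link_verts_weight:
  "(\<Sum>u\<in>link_verts F r. weight (insert u r)) = real (d + 1 - card r) * weight r"
proof -
  have "card (T - r) = d + 1 - card r" if "T \<in> tops r" for T
  proof -
    have T: "T \<in> F" "r \<subseteq> T" using that by (auto simp: tops_def)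
    then have "finite r" using finite_top finite_subset by blast
    then show ?thesis using card_Diff_subset[of r T] card_top[OF T(1)] T(2) by simp
  qed
  then have "(\<Sum>T\<in>tops r. \<Sum>u\<in>T - r. w T) = (\<Sum>T\<in>tops r. real (d + 1 - card r) * w T)"
    by (intro sum.cong) auto
  then show ?thesis
    unfolding weight_def sum_link_verts by (simp add: sum_distrib_left)
qed

lemma link_vertD:
  assumes "v \<in> link_verts F s"
  shows "v \<notin> s" "finite s" "card (insert v s) = card s + 1" "0 < weight (insert v s)"
proof -
  show "v \<notin> s" using assms by (simp add: link_verts_def)
  have "insert v s \<in> faces F" using assms by (simp add: link_verts_def)
  then obtain T where "T \<in> F" "insert v s \<subseteq> T" by (auto simp: faces_def)
  then have "s \<subseteq> T" "finite T" using finite_top by auto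
  then show "finite s" by (rule finite_subset)
  with \<open>v \<notin> s\<close> show "card (insert v s) = card s + 1" by simp
  show "0 < weight (insert v s)"
    using \<open>insert v s \<in> faces F\<close> weight_pos[of "insert v s"] by (simp add: faces_iff_tops)
qed

lemma link_verts_insert:
  "v \<in> link_verts F s \<Longrightarrow>
   link_verts F (insert v s) = {u\<in>link_verts F s. u \<noteq> v \<and> insert u (insert v s) \<in> faces F}"
  by (auto simp: link_verts_def faces_def)

text \<open>Edge and vertex measures of the underlying graph of the link of \<open>s\<close>, up to a constant
  factor.\<close>
definition link_kernel :: "'a set \<Rightarrow> 'a \<Rightarrow> 'a \<Rightarrow> real" where
  "link_kernel s v u =
     (if u \<noteq> v \<and> insert u (insert v s) \<in> faces F then weight (insert u (insert v s)) else 0)"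

definition link_deg :: "'a set \<Rightarrow> 'a \<Rightarrow> real" where
  "link_deg s v = real (d - card s) * weight (insert v s)"

lemma link_kernel_sym: "link_kernel s u v = link_kernel s v u"
  by (simp add: link_kernel_def insert_commute)

lemma sum_link_kernel:
  assumes "v \<in> link_verts F s"
  shows "(\<Sum>u\<in>link_verts F s. link_kernel s v u * q u)
    = (\<Sum>u\<in>link_verts F (insert v s). weight (insert u (insert v s)) * q u)"
proof -
  have "(\<Sum>u\<in>link_verts F s. link_kernel s v u * q u)
      = (\<Sum>u\<in>link_verts F s. if u \<noteq> v \<and> insert u (insert v s) \<in> faces F
          then weight (insert u (insert v s)) * q u else 0)"
    by (intro sum.cong) (auto simp: link_kernel_def)
  then show ?thesis
    unfolding link_verts_insert[OF assms] by (simp add: sum.inter_filter[OF finite_link_verts])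
qed

lemma sum_link_kernel_eq_link_deg:
  assumes "v \<in> link_verts F s"
  shows "(\<Sum>u\<in>link_verts F s. link_kernel s v u) = link_deg s v"
  using sum_link_kernel[OF assms, of "\<lambda>_. 1"] sum_link_verts_weight[of "insert v s"]
    link_vertD(3)[OF assms]
  by (simp add: link_deg_def)

lemma link_deg_link_walk:
  assumes v: "v \<in> link_verts F s" and k: "card s + 2 \<le> d + 1"
  shows "link_deg s v * link_walk d F w s q v = (\<Sum>u\<in>link_verts F s. link_kernel s v u * q u)"
proof -
  let ?N = "{u\<in>link_verts F s. u \<noteq> v \<and> insert u (insert v s) \<in> faces F}"
  define C where "C = real ((d + 1) choose (card s + 2))"
  have "0 < (d + 1) choose (card s + 2)" using k by (rule zero_less_binomial)
  then have "C > 0" by (simp only: C_def of_nat_0_less_iff)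
  have meas: "meas d F w (insert u (insert v s)) = weight (insert u (insert v s)) / C" if "u \<in> ?N" for u
    using that link_vertD[OF v] by (simp add: meas_eq_weight C_def link_verts_def)
  have num: "(\<Sum>u\<in>?N. meas d F w (insert u (insert v s)) * h u)
      = (\<Sum>u\<in>link_verts F s. link_kernel s v u * h u) / C" for h
    using meas sum_link_kernel[OF v, of h] link_verts_insert[OF v]
    by (simp add: sum_divide_distrib)
  have "(\<Sum>u\<in>?N. meas d F w (insert u (insert v s))) = (\<Sum>u\<in>link_verts F s. link_kernel s v u) / C"
    using num[of "\<lambda>_. 1"] by simp
  with num have "link_walk d F w s q v
      = (\<Sum>u\<in>link_verts F s. link_kernel s v u * q u) / (\<Sum>u\<in>link_verts F s. link_kernel s v u)"
    using \<open>C > 0\<close> by (simp add: link_walk_def)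
  then show ?thesis
    using sum_link_kernel_eq_link_deg[OF v] k link_vertD(4)[OF v] by (simp add: link_deg_def)
qed

lemma link_deg_eq_link_vmeas:
  assumes v: "v \<in> link_verts F s" and k: "card s + 2 \<le> d + 1"
  shows "link_deg s v = real (d - card s) * real (d + 1 - card s) * weight s * link_vmeas d F w s v"
proof -
  define C where "C = real ((d + 1) choose (card s + 1))"
  have "0 < (d + 1) choose (card s + 1)" using k by (intro zero_less_binomial) simp
  then have "C > 0" by (simp only: C_def of_nat_0_less_iff)
  have meas: "meas d F w (insert u s) = weight (insert u s) / C" if "u \<in> link_verts F s" for u
    using link_vertD(3)[OF that] by (simp add: meas_eq_weight C_def)
  then have "(\<Sum>u\<in>link_verts F s. meas d F w (insert u s)) = real (d + 1 - card s) * weight s / C"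
    by (simp add: sum_divide_distrib[symmetric] sum_link_verts_weight)
  moreover have "weight s > 0"
    using v weight_pos by (auto simp: link_verts_def faces_def tops_def)
  ultimately show ?thesis
    using meas[OF v] \<open>C > 0\<close> k by (simp add: link_vmeas_def link_deg_def)
qed

lemma sum_link_deg:
  "(\<Sum>v\<in>link_verts F s. link_deg s v * q v) = real (d - card s) * (\<Sum>T\<in>tops s. w T * (\<Sum>v\<in>T - s. q v))"
proof -
  have "(\<Sum>v\<in>link_verts F s. link_deg s v * q v)
      = (\<Sum>v\<in>link_verts F s. real (d - card s) * (\<Sum>T\<in>tops (insert v s). w T * q v))"
    by (intro sum.cong refl) (simp add: link_deg_def weight_def sum_distrib_right mult.assoc)
  also have "\<dots> = real (d - card s) * (\<Sum>v\<in>link_verts F s. \<Sum>T\<in>tops (insert v s). w T * q v)"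
    by (rule sum_distrib_left[symmetric])
  also have "(\<Sum>v\<in>link_verts F s. \<Sum>T\<in>tops (insert v s). w T * q v) = (\<Sum>T\<in>tops s. \<Sum>v\<in>T - s. w T * q v)"
    by (rule sum_link_verts)
  also have "\<dots> = (\<Sum>T\<in>tops s. w T * (\<Sum>v\<in>T - s. q v))"
    by (simp add: sum_distrib_left)
  finally show ?thesis .
qed

lemma link_kernel_form:
  "bilinear_form (link_verts F s) (link_kernel s) q q
    = (\<Sum>T\<in>tops s. w T * ((\<Sum>v\<in>T - s. q v)\<^sup>2 - (\<Sum>v\<in>T - s. (q v)\<^sup>2)))"
proof -
  have "bilinear_form (link_verts F s) (link_kernel s) q q
      = (\<Sum>v\<in>link_verts F s. \<Sum>u\<in>link_verts F (insert v s). \<Sum>T\<in>tops (insert u (insert v s)). w T * q u * q v)"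
    unfolding bilinear_form_def
  proof (rule sum.cong[OF refl])
    fix v assume v: "v \<in> link_verts F s"
    have "(\<Sum>u\<in>link_verts F s. link_kernel s v u * q u * q v)
        = (\<Sum>u\<in>link_verts F s. link_kernel s v u * q u) * q v"
      by (rule sum_distrib_right[symmetric])
    also have "\<dots> = (\<Sum>u\<in>link_verts F (insert v s). weight (insert u (insert v s)) * q u) * q v"
      by (simp only: sum_link_kernel[OF v])
    also have "\<dots> = (\<Sum>u\<in>link_verts F (insert v s). \<Sum>T\<in>tops (insert u (insert v s)). w T * q u * q v)"
      by (simp add: weight_def sum_distrib_right)
    finally show "(\<Sum>u\<in>link_verts F s. link_kernel s v u * q u * q v)
        = (\<Sum>u\<in>link_verts F (insert v s). \<Sum>T\<in>tops (insert u (insert v s)). w T * q u * q v)" .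
  qed
  also have "\<dots> = (\<Sum>v\<in>link_verts F s. \<Sum>T\<in>tops (insert v s). \<Sum>u\<in>T - insert v s. w T * q u * q v)"
    by (rule sum.cong[OF refl], rule sum_link_verts)
  also have "\<dots> = (\<Sum>T\<in>tops s. \<Sum>v\<in>T - s. \<Sum>u\<in>T - insert v s. w T * q u * q v)"
    by (rule sum_link_verts)
  also have "\<dots> = (\<Sum>T\<in>tops s. \<Sum>v\<in>T - s. \<Sum>u\<in>(T - s) - {v}. w T * q u * q v)"
    by (intro sum.cong refl) auto
  also have "\<dots> = (\<Sum>T\<in>tops s. w T * ((\<Sum>v\<in>T - s. q v)\<^sup>2 - (\<Sum>v\<in>T - s. (q v)\<^sup>2)))"
  proof (rule sum.cong[OF refl])
    fix T assume "T \<in> tops s"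
    then have "finite (T - s)" using finite_top by (auto simp: tops_def)
    then show "(\<Sum>v\<in>T - s. \<Sum>u\<in>T - s - {v}. w T * q u * q v)
        = w T * ((\<Sum>v\<in>T - s. q v)\<^sup>2 - (\<Sum>v\<in>T - s. (q v)\<^sup>2))"
      using sum_off_diagonal_products[of "T - s" q]
      by (simp add: sum_distrib_left[symmetric] mult.assoc)
  qed
  finally show ?thesis .
qed

section \<open>Pairs of colors via the spectral gap of links\<close>

lemma link_form_le:
  assumes expansion: "link_lambda2_le d F w s \<mu>" and k: "card s + 2 \<le> d + 1" and "tops s \<noteq> {}"
    and centered: "(\<Sum>T\<in>tops s. w T * (\<Sum>v\<in>T - s. q v)) = 0"
  shows "(\<Sum>T\<in>tops s. w T * ((\<Sum>v\<in>T - s. q v)\<^sup>2 - (\<Sum>v\<in>T - s. (q v)\<^sup>2)))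
    \<le> \<mu> * real (d - card s) * (\<Sum>T\<in>tops s. w T * (\<Sum>v\<in>T - s. (q v)\<^sup>2))"
proof -
  let ?L = "link_verts F s"
  have pos: "\<forall>v\<in>?L. 0 < link_deg s v"
    using k link_vertD(4) by (auto simp: link_deg_def)
  define c where "c = real (d - card s) * real (d + 1 - card s) * weight s"
  have "c > 0" using k weight_pos[OF \<open>tops s \<noteq> {}\<close>] by (simp add: c_def)
  have "link_vmeas d F w s v = link_deg s v / c" if "v \<in> ?L" for v
  proof -
    have "link_deg s v = c * link_vmeas d F w s v"
      using link_deg_eq_link_vmeas[OF that k] by (simp only: c_def)
    with \<open>c > 0\<close> show ?thesis by simp
  qed
  then have vmeas: "(\<Sum>v\<in>?L. link_vmeas d F w s v * f v) = (\<Sum>v\<in>?L. link_deg s v * f v) / c" for f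
    by (simp add: sum_divide_distrib)
  have eig: "\<theta> \<le> \<mu>" if "\<exists>v\<in>?L. f v \<noteq> 0" "(\<Sum>v\<in>?L. link_deg s v * f v) = 0"
    "\<forall>v\<in>?L. link_walk d F w s f v = \<theta> * f v" for f \<theta>
    using expansion that vmeas[of f] unfolding link_lambda2_le_def by auto
  have "(\<Sum>v\<in>?L. link_deg s v * q v) = 0" using centered by (simp add: sum_link_deg)
  with pos have "bilinear_form ?L (link_kernel s) q q \<le> \<mu> * (\<Sum>v\<in>?L. link_deg s v * (q v)\<^sup>2)"
    using finite_link_verts link_kernel_sym sum_link_kernel_eq_link_deg link_deg_link_walk[OF _ k] eig
    by (intro reversible_walk_form_le[where K = "link_walk d F w s"]) auto
  then show ?thesis unfolding link_kernel_form sum_link_deg by (simp add: mult.assoc)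
qed

lemma sum_diff_face_two_colors:
  assumes T: "T \<in> tops s" and ij: "i \<noteq> j" "i \<notin> col ` s" "j \<notin> col ` s"
    and q: "\<And>v. col v \<noteq> i \<Longrightarrow> col v \<noteq> j \<Longrightarrow> q v = 0"
  shows "(\<Sum>v\<in>T - s. q v) = (\<Sum>v\<in>col_part {i} T. q v) + (\<Sum>v\<in>col_part {j} T. q v)"
proof -
  have "finite (T - s)" using T finite_top by (simp add: tops_def)
  have sub: "col_part {i} T \<union> col_part {j} T \<subseteq> T - s" using ij by (auto simp: col_part_def)
  have "(\<Sum>v\<in>T - s. q v) = (\<Sum>v\<in>col_part {i} T \<union> col_part {j} T. q v)"
    using sub q by (intro sum.mono_neutral_right[OF \<open>finite (T - s)\<close>]) (auto simp: col_part_def)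
  also have "\<dots> = (\<Sum>v\<in>col_part {i} T. q v) + (\<Sum>v\<in>col_part {j} T. q v)"
    using ij(1) sub finite_subset[OF sub \<open>finite (T - s)\<close>]
    by (intro sum.union_disjoint) (auto simp: col_part_def)
  finally show ?thesis .
qed

text \<open>The link form is evaluated at the function that is \<open>\<alpha> f\<close> on the \<open>i\<close>-colored and \<open>\<beta> g\<close> on the
  \<open>j\<close>-colored vertex of each top face.\<close>
lemma link_pair_form_le:
  assumes expansion: "link_lambda2_le d F w s \<mu>" and k: "card s + 2 \<le> d + 1" and "tops s \<noteq> {}"
    and ij: "i \<noteq> j" "i \<le> d" "j \<le> d" "i \<notin> col ` s" "j \<notin> col ` s"
    and cf: "(\<Sum>T\<in>tops s. w T * f (col_part {i} T)) = 0"
    and cg: "(\<Sum>T\<in>tops s. w T * g (col_part {j} T)) = 0"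
  shows "2 * \<alpha> * \<beta> * (\<Sum>T\<in>tops s. w T * f (col_part {i} T) * g (col_part {j} T))
    \<le> real (d - card s) * \<mu> * (\<alpha>\<^sup>2 * (\<Sum>T\<in>tops s. w T * (f (col_part {i} T))\<^sup>2)
      + \<beta>\<^sup>2 * (\<Sum>T\<in>tops s. w T * (g (col_part {j} T))\<^sup>2))"
proof -
  define h where "h v = (if col v = i then \<alpha> * f {v} else if col v = j then \<beta> * g {v} else 0)" for v
  have h: "(\<Sum>v\<in>T - s. h v) = \<alpha> * f (col_part {i} T) + \<beta> * g (col_part {j} T)"
    "(\<Sum>v\<in>T - s. (h v)\<^sup>2) = \<alpha>\<^sup>2 * (f (col_part {i} T))\<^sup>2 + \<beta>\<^sup>2 * (g (col_part {j} T))\<^sup>2"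
    if "T \<in> tops s" for T
  proof -
    have "T \<in> F" using that by (simp add: tops_def)
    obtain vi where vi: "col vi = i" "col_part {i} T = {vi}"
      using col_part_singleton[OF \<open>T \<in> F\<close> ij(2)] .
    obtain vj where vj: "col vj = j" "col_part {j} T = {vj}"
      using col_part_singleton[OF \<open>T \<in> F\<close> ij(3)] .
    have "(\<Sum>v\<in>T - s. h v) = h vi + h vj"
      using sum_diff_face_two_colors[OF that ij(1,4,5), of h] vi(2) vj(2) by (simp add: h_def)
    moreover have "(\<Sum>v\<in>T - s. (h v)\<^sup>2) = (h vi)\<^sup>2 + (h vj)\<^sup>2"
      using sum_diff_face_two_colors[OF that ij(1,4,5), of "\<lambda>v. (h v)\<^sup>2"] vi(2) vj(2)
      by (simp add: h_def)
    ultimately show "(\<Sum>v\<in>T - s. h v) = \<alpha> * f (col_part {i} T) + \<beta> * g (col_part {j} T)"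
      "(\<Sum>v\<in>T - s. (h v)\<^sup>2) = \<alpha>\<^sup>2 * (f (col_part {i} T))\<^sup>2 + \<beta>\<^sup>2 * (g (col_part {j} T))\<^sup>2"
      using vi vj ij(1) by (simp_all add: h_def power_mult_distrib)
  qed
  have "(\<Sum>T\<in>tops s. w T * (\<Sum>v\<in>T - s. h v))
      = \<alpha> * (\<Sum>T\<in>tops s. w T * f (col_part {i} T)) + \<beta> * (\<Sum>T\<in>tops s. w T * g (col_part {j} T))"
    using h(1) by (simp add: algebra_simps sum.distrib sum_distrib_left)
  then have "(\<Sum>T\<in>tops s. w T * (\<Sum>v\<in>T - s. h v)) = 0" using cf cg by simp
  note form = link_form_le[OF expansion k \<open>tops s \<noteq> {}\<close> this]
  have "(\<Sum>T\<in>tops s. w T * ((\<Sum>v\<in>T - s. h v)\<^sup>2 - (\<Sum>v\<in>T - s. (h v)\<^sup>2)))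
      = (\<Sum>T\<in>tops s. 2 * \<alpha> * \<beta> * (w T * f (col_part {i} T) * g (col_part {j} T)))"
    using h by (intro sum.cong refl) (simp add: power2_eq_square algebra_simps)
  also have "\<dots> = 2 * \<alpha> * \<beta> * (\<Sum>T\<in>tops s. w T * f (col_part {i} T) * g (col_part {j} T))"
    by (simp add: sum_distrib_left)
  finally have lhs: "(\<Sum>T\<in>tops s. w T * ((\<Sum>v\<in>T - s. h v)\<^sup>2 - (\<Sum>v\<in>T - s. (h v)\<^sup>2)))
      = 2 * \<alpha> * \<beta> * (\<Sum>T\<in>tops s. w T * f (col_part {i} T) * g (col_part {j} T))" .
  have "(\<Sum>T\<in>tops s. w T * (\<Sum>v\<in>T - s. (h v)\<^sup>2))
      = (\<Sum>T\<in>tops s. \<alpha>\<^sup>2 * (w T * (f (col_part {i} T))\<^sup>2) + \<beta>\<^sup>2 * (w T * (g (col_part {j} T))\<^sup>2))"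
    using h by (intro sum.cong refl) (simp add: algebra_simps)
  also have "\<dots> = \<alpha>\<^sup>2 * (\<Sum>T\<in>tops s. w T * (f (col_part {i} T))\<^sup>2)
      + \<beta>\<^sup>2 * (\<Sum>T\<in>tops s. w T * (g (col_part {j} T))\<^sup>2)"
    by (simp add: sum.distrib sum_distrib_left)
  finally show ?thesis using form lhs by (simp add: mult_ac)
qed

lemma card_free_colors:
  assumes "tops s \<noteq> {}"
  shows "card ({0..d} - col ` s) = d + 1 - card s"
proof -
  obtain T where T: "T \<in> F" "s \<subseteq> T" using assms by (auto simp: tops_def)
  then have "inj_on col s" "col ` s \<subseteq> {0..d}" "finite s"
    using inj_on_subset[OF inj_on_col[OF T(1)]] col_top[OF T(1)] finite_subset[OF _ finite_top]
    by auto
  then show ?thesis by (simp add: card_Diff_subset card_image)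
qed

lemma card_add_two_le_if_free_colors:
  assumes "tops s \<noteq> {}" and ij: "i \<noteq> j" "i \<le> d" "j \<le> d" "i \<notin> col ` s" "j \<notin> col ` s"
  shows "card s + 2 \<le> d + 1"
proof -
  have "card {i, j} \<le> card ({0..d} - col ` s)" using ij by (intro card_mono) auto
  then show ?thesis using card_free_colors[OF assms(1)] ij(1) by simp
qed

lemma link_corr_le_pair:
  assumes expander: "one_sided_link_expander d F w \<mu>" and "0 \<le> \<mu>"
    and ij: "i \<noteq> j" "i \<le> d" "j \<le> d" "i \<notin> col ` s" "j \<notin> col ` s"
  shows "link_corr_le s {i} {j} (real (d - card s) * \<mu>)"
  unfolding max_corr_le_def
proof (intro allI impI)
  fix f g
  assume cf: "(\<Sum>T\<in>tops s. w T * f (col_part {i} T)) = 0"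
    and cg: "(\<Sum>T\<in>tops s. w T * g (col_part {j} T)) = 0"
  define S A B where "S = (\<Sum>T\<in>tops s. w T * f (col_part {i} T) * g (col_part {j} T))"
    and "A = (\<Sum>T\<in>tops s. w T * (f (col_part {i} T))\<^sup>2)"
    and "B = (\<Sum>T\<in>tops s. w T * (g (col_part {j} T))\<^sup>2)"
  have w: "\<forall>T\<in>tops s. 0 \<le> w T" using tops_w_pos by (simp add: less_imp_le)
  have "0 \<le> A" "0 \<le> B" using w by (auto simp: A_def B_def intro!: sum_nonneg)
  have cs: "S \<le> sqrt A * sqrt B" unfolding S_def A_def B_def using w by (rule weighted_Cauchy_Schwarz)
  show "S \<le> real (d - card s) * \<mu> * sqrt A * sqrt B"
  proof (cases "tops s = {}")
    case False
    note k = card_add_two_le_if_free_colors[OF False ij]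
    have "s \<in> faces F" using False by (simp add: faces_iff_tops)
    then have expansion: "link_lambda2_le d F w s \<mu>"
      using expander k by (simp add: one_sided_link_expander_def)
    show ?thesis
      using \<open>0 \<le> A\<close> \<open>0 \<le> B\<close> link_pair_form_le[OF expansion k False ij cf cg] cs
      unfolding S_def[symmetric] A_def[symmetric] B_def[symmetric]
      by (rule le_mult_sqrt_if_forall_am_gm)
  qed (simp add: S_def A_def B_def)
qed

section \<open>From pairs of colors to sets of colors\<close>

lemma link_corr_le_card:
  assumes pair: "\<And>s j. j \<le> d \<Longrightarrow> j \<notin> I \<Longrightarrow> col ` s \<inter> insert j I = {} \<Longrightarrow> link_corr_le s {j} I c"
    and "0 \<le> c"
  shows "finite J \<Longrightarrow> J \<noteq> {} \<Longrightarrow> J \<subseteq> {0..d} \<Longrightarrow> I \<inter> J = {} \<Longrightarrow> col ` s \<inter> (I \<union> J) = {}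
    \<Longrightarrow> link_corr_le s J I (real (card J) * c)"
proof (induction J arbitrary: s rule: finite_ne_induct)
  case (singleton j)
  then show ?case using pair by auto
next
  case (insert j J)
  let ?X = "col_part (insert j J)" and ?Z = "col_part {j}"
  have fibers: "\<forall>x\<in>?Z ` tops s. max_corr_le {T\<in>tops s. ?Z T = x} w ?X (col_part I) (real (card J) * c)"
  proof
    fix x assume "x \<in> ?Z ` tops s"
    then obtain T0 where "T0 \<in> tops s" "x = ?Z T0" by blast
    then have "col ` x = {j}" using insert.prems(1) col_col_part[of T0 "{j}"] by (simp add: tops_def)
    then have fiber: "{T\<in>tops s. ?Z T = x} = tops (s \<union> x)" by (rule tops_col_part_eq)
    have "col ` (s \<union> x) \<inter> (I \<union> J) = {}"
      using insert.prems(2,3) \<open>col ` x = {j}\<close> \<open>j \<notin> J\<close> by (auto simp: image_Un)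
    then have IH: "link_corr_le (s \<union> x) J I (real (card J) * c)"
      using insert.IH insert.prems(1,2) by auto
    have X_eq: "\<forall>T\<in>tops (s \<union> x). ?X T = x \<union> col_part J T"
    proof
      fix T assume "T \<in> tops (s \<union> x)"
      then have "?Z T = x" by (simp add: fiber[symmetric])
      then show "?X T = x \<union> col_part J T" using col_part_Un[of "{j}" J T] by simp
    qed
    show "max_corr_le {T\<in>tops s. ?Z T = x} w ?X (col_part I) (real (card J) * c)"
      unfolding fiber using X_eq IH by (rule max_corr_le_coarsen)
  qed
  have "col ` s \<inter> insert j I = {}" using insert.prems(3) by auto
  then have "link_corr_le s {j} I c" using pair insert.prems(1,2) by auto
  then have "max_corr_le (tops s) w ?X (col_part I) (real (card J) * c + c)"
    using fibers \<open>0 \<le> c\<close> by (intro max_corr_le_add[OF finite_tops tops_w_pos]) auto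
  then show ?case using insert.hyps by (simp add: algebra_simps)
qed

lemma link_corr_le_card_card:
  assumes pair: "\<And>s i j. i \<noteq> j \<Longrightarrow> i \<le> d \<Longrightarrow> j \<le> d \<Longrightarrow> i \<notin> col ` s \<Longrightarrow> j \<notin> col ` s \<Longrightarrow>
      link_corr_le s {i} {j} \<gamma>"
    and "0 \<le> \<gamma>" and IJ: "I \<subseteq> {0..d}" "J \<subseteq> {0..d}" "I \<noteq> {}" "J \<noteq> {}" "I \<inter> J = {}"
  shows "link_corr_le {} J I (real (card J) * real (card I) * \<gamma>)"
proof -
  have "link_corr_le s {j} I (real (card I) * \<gamma>)"
    if "j \<le> d" "j \<notin> I" "col ` s \<inter> insert j I = {}" for s j
  proof (rule max_corr_le_sym)
    show "link_corr_le s I {j} (real (card I) * \<gamma>)"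
      using link_corr_le_card[of "{j}" \<gamma> I s] pair \<open>0 \<le> \<gamma>\<close> IJ(1,3) that finite_subset[OF IJ(1)]
      by auto
  qed
  then have "link_corr_le {} J I (real (card J) * (real (card I) * \<gamma>))"
    using link_corr_le_card[of I "real (card I) * \<gamma>" J "{}"] \<open>0 \<le> \<gamma>\<close> IJ finite_subset[OF IJ(2)]
    by auto
  then show ?thesis by (simp add: mult.assoc)
qed


section \<open>Trickling down\<close>

lemma third_free_color:
  assumes "tops s \<noteq> {}" "card s + 3 \<le> d + 1"
  obtains k where "k \<le> d" "k \<notin> col ` s" "k \<noteq> a" "k \<noteq> b"
proof -
  have "\<not> {0..d} - col ` s \<subseteq> {a, b}"
  proof
    assume "{0..d} - col ` s \<subseteq> {a, b}"
    then have "card ({0..d} - col ` s) \<le> card {a, b}" by (intro card_mono) auto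
    also have "\<dots> \<le> 2" by (cases "a = b") auto
    finally show False using card_free_colors[OF assms(1)] assms(2) by simp
  qed
  then obtain k where "k \<in> {0..d} - col ` s" "k \<notin> {a, b}" by (auto simp: subset_iff)
  with that show ?thesis by auto
qed

text \<open>Trickling down through a third free color \<open>k\<close>: the fibers of the \<open>k\<close>-colored vertex are the links
  of the faces \<open>s \<union> {v}\<close>.\<close>
lemma link_corr_le_pair_step:
  assumes links: "\<And>s' i j. card s' = card s + 1 \<Longrightarrow> i \<noteq> j \<Longrightarrow> i \<le> d \<Longrightarrow> j \<le> d \<Longrightarrow>
      i \<notin> col ` s' \<Longrightarrow> j \<notin> col ` s' \<Longrightarrow> link_corr_le s' {i} {j} \<gamma>"
    and pairs: "\<And>i j. i \<noteq> j \<Longrightarrow> i \<le> d \<Longrightarrow> j \<le> d \<Longrightarrow> i \<notin> col ` s \<Longrightarrow> j \<notin> col ` s \<Longrightarrow>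
      link_corr_le s {i} {j} \<sigma>"
    and "0 \<le> \<gamma>" "\<gamma> \<le> 1" "0 \<le> \<sigma>"
    and ab: "a \<noteq> b" "a \<le> d" "b \<le> d" "a \<notin> col ` s" "b \<notin> col ` s"
    and k: "k \<le> d" "k \<notin> col ` s" "k \<noteq> a" "k \<noteq> b"
  shows "link_corr_le s {a} {b} (\<gamma> + (1 - \<gamma>) * \<sigma>\<^sup>2)"
proof (rule max_corr_le_trickle[OF finite_tops tops_w_pos])
  show "\<forall>x\<in>col_part {k} ` tops s.
      max_corr_le {T\<in>tops s. col_part {k} T = x} w (col_part {a}) (col_part {b}) \<gamma>"
  proof
    fix x assume "x \<in> col_part {k} ` tops s"
    then obtain T where T: "T \<in> tops s" "x = col_part {k} T" by blast
    then have "T \<in> F" "s \<subseteq> T" by (auto simp: tops_def)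
    obtain v where v: "v \<in> T" "col v = k" "col_part {k} T = {v}"
      using col_part_singleton[OF \<open>T \<in> F\<close> k(1)] .
    have "finite s" using \<open>s \<subseteq> T\<close> finite_top[OF \<open>T \<in> F\<close>] by (rule finite_subset)
    moreover have "v \<notin> s" using v(2) k(2) by auto
    ultimately have "card (s \<union> x) = card s + 1" using T(2) v(3) by simp
    moreover have "a \<notin> col ` (s \<union> x)" "b \<notin> col ` (s \<union> x)" using ab k T(2) v by auto
    ultimately have "link_corr_le (s \<union> x) {a} {b} \<gamma>" using links ab(1-3) by blast
    moreover have "{T\<in>tops s. col_part {k} T = x} = tops (s \<union> x)"
      using T(2) v by (intro tops_col_part_eq) simp
    ultimately show "max_corr_le {T\<in>tops s. col_part {k} T = x} w (col_part {a}) (col_part {b}) \<gamma>"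
      by simp
  qed
  show "link_corr_le s {a} {k} \<sigma>" "link_corr_le s {b} {k} \<sigma>" using pairs ab k by auto
qed (use assms in auto)

lemma max_pair_corr_attained:
  assumes ij: "i \<noteq> j" "i \<le> d" "j \<le> d" "i \<notin> col ` s" "j \<notin> col ` s"
  obtains a b where "a \<noteq> b" "a \<le> d" "b \<le> d" "a \<notin> col ` s" "b \<notin> col ` s"
    "\<And>i j. i \<noteq> j \<Longrightarrow> i \<le> d \<Longrightarrow> j \<le> d \<Longrightarrow> i \<notin> col ` s \<Longrightarrow> j \<notin> col ` s \<Longrightarrow>
      link_corr_le s {i} {j} (max_corr (tops s) w (col_part {a}) (col_part {b}))"
proof -
  define P where "P = {(a, b). a \<noteq> b \<and> a \<le> d \<and> b \<le> d \<and> a \<notin> col ` s \<and> b \<notin> col ` s}"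
  define \<rho> where "\<rho> = (\<lambda>(a, b). max_corr (tops s) w (col_part {a}) (col_part {b}))"
  have "finite P" by (rule finite_subset[of _ "{0..d} \<times> {0..d}"]) (auto simp: P_def)
  moreover have "(i, j) \<in> P" using ij by (simp add: P_def)
  ultimately have "Max (\<rho> ` P) \<in> \<rho> ` P" by (intro Max_in) auto
  then obtain a b where ab: "(a, b) \<in> P" "Max (\<rho> ` P) = \<rho> (a, b)" by auto
  have w: "\<forall>T\<in>tops s. 0 \<le> w T" using tops_w_pos by (simp add: less_imp_le)
  have "link_corr_le s {i'} {j'} (\<rho> (a, b))" if "(i', j') \<in> P" for i' j'
  proof (rule max_corr_le_mono[OF max_corr_le_max_corr[OF w] _ w])
    show "max_corr (tops s) w (col_part {i'}) (col_part {j'}) \<le> \<rho> (a, b)"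
      using that \<open>finite P\<close> ab(2)[symmetric] by (force simp: \<rho>_def intro: Max_ge)
  qed
  with ab(1) that show ?thesis by (auto simp: P_def \<rho>_def)
qed

lemma link_corr_le_pair_trickle:
  assumes expander: "one_sided_link_expander d F w \<mu>" and "0 \<le> \<mu>" and "real d * \<mu> < 1"
  shows "card s + n + 1 = d \<Longrightarrow> i \<noteq> j \<Longrightarrow> i \<le> d \<Longrightarrow> j \<le> d \<Longrightarrow> i \<notin> col ` s \<Longrightarrow> j \<notin> col ` s \<Longrightarrow>
    link_corr_le s {i} {j} (\<mu> / (1 - real n * \<mu>))"
proof (induction n arbitrary: s i j)
  case 0
  then have "d - card s = 1" by simp
  with link_corr_le_pair[OF expander \<open>0 \<le> \<mu>\<close> "0.prems"(2-6)] show ?case by simp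
next
  case (Suc m)
  have "real (Suc m) * \<mu> \<le> real d * \<mu>" using Suc.prems(1) \<open>0 \<le> \<mu>\<close> by (intro mult_right_mono) auto
  then have "real (Suc m) * \<mu> < 1" using \<open>real d * \<mu> < 1\<close> by linarith
  note \<gamma> = trickle_constant[OF \<open>0 \<le> \<mu>\<close> this]
  show ?case
  proof (cases "tops s = {}")
    case False
    obtain a b where ab: "a \<noteq> b" "a \<le> d" "b \<le> d" "a \<notin> col ` s" "b \<notin> col ` s"
      and \<sigma>: "\<And>i j. i \<noteq> j \<Longrightarrow> i \<le> d \<Longrightarrow> j \<le> d \<Longrightarrow> i \<notin> col ` s \<Longrightarrow> j \<notin> col ` s \<Longrightarrow>
        link_corr_le s {i} {j} (max_corr (tops s) w (col_part {a}) (col_part {b}))"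
      using max_pair_corr_attained[OF Suc.prems(2-6)] by blast
    define \<sigma> where "\<sigma> = max_corr (tops s) w (col_part {a}) (col_part {b})"
    have "0 \<le> \<sigma>" using tops_w_pos by (simp add: \<sigma>_def max_corr_nonneg less_imp_le)
    have "card s + 3 \<le> d + 1" using Suc.prems(1) by simp
    then obtain k where k: "k \<le> d" "k \<notin> col ` s" "k \<noteq> a" "k \<noteq> b"
      using third_free_color[OF False] by blast
    have links: "link_corr_le s' {i'} {j'} (\<mu> / (1 - real m * \<mu>))"
      if "card s' = card s + 1" "i' \<noteq> j'" "i' \<le> d" "j' \<le> d" "i' \<notin> col ` s'" "j' \<notin> col ` s'"
      for s' i' j'
      using Suc.IH[of s' i' j'] that Suc.prems(1) by simp
    have "link_corr_le s {a} {b} (\<mu> / (1 - real m * \<mu>) + (1 - \<mu> / (1 - real m * \<mu>)) * \<sigma>\<^sup>2)"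
      unfolding \<sigma>_def
      by (rule link_corr_le_pair_step[OF links \<sigma> \<gamma>(1) less_imp_le[OF \<gamma>(2)] \<open>0 \<le> \<sigma>\<close>[unfolded \<sigma>_def] ab k])
    then have "\<sigma> \<le> \<mu> / (1 - real m * \<mu>) + (1 - \<mu> / (1 - real m * \<mu>)) * \<sigma>\<^sup>2"
      using \<gamma>(1,2) by (simp add: \<sigma>_def max_corr_least)
    moreover have "\<sigma> \<le> real (d - card s) * \<mu>"
      using link_corr_le_pair[OF expander \<open>0 \<le> \<mu>\<close> ab] \<open>0 \<le> \<mu>\<close> by (simp add: \<sigma>_def max_corr_least)
    then have "\<sigma> < 1"
      using mult_right_mono[of "real (d - card s)" "real d" \<mu>] \<open>0 \<le> \<mu>\<close> \<open>real d * \<mu> < 1\<close> by simp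
    ultimately have "\<sigma> \<le> \<mu> / (1 - real (Suc m) * \<mu>)"
      using le_div_if_le_quadratic \<gamma>(2,3) by metis
    with \<sigma>[OF Suc.prems(2-6)] show ?thesis
      using tops_w_pos by (auto simp: \<sigma>_def less_imp_le intro: max_corr_le_mono)
  qed (simp add: max_corr_le_empty)
qed

lemma link_corr_le_pair_uniform:
  assumes expander: "one_sided_link_expander d F w \<mu>" and "0 \<le> \<mu>" and "real d * \<mu> < 1"
    and ij: "i \<noteq> j" "i \<le> d" "j \<le> d" "i \<notin> col ` s" "j \<notin> col ` s"
  shows "link_corr_le s {i} {j} (\<mu> / (1 - (real d - 1) * \<mu>))"
proof (cases "tops s = {}")
  case False
  have "card {i, j} \<le> card ({0..d} - col ` s)" using ij by (intro card_mono) auto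
  then have n: "card s + (d - 1 - card s) + 1 = d" using card_free_colors[OF False] ij(1) by simp
  then have corr: "link_corr_le s {i} {j} (\<mu> / (1 - real (d - 1 - card s) * \<mu>))"
    using link_corr_le_pair_trickle[OF assms(1-3)] ij by blast
  have "(real d - 1) * \<mu> \<le> real d * \<mu>" using \<open>0 \<le> \<mu>\<close> by (simp add: algebra_simps)
  then have "0 < 1 - (real d - 1) * \<mu>" using \<open>real d * \<mu> < 1\<close> by linarith
  moreover have "real (d - 1 - card s) \<le> real d - 1"
    using arg_cong[OF n, of real] by simp
  then have "real (d - 1 - card s) * \<mu> \<le> (real d - 1) * \<mu>"
    using \<open>0 \<le> \<mu>\<close> by (rule mult_right_mono)
  ultimately have "\<mu> / (1 - real (d - 1 - card s) * \<mu>) \<le> \<mu> / (1 - (real d - 1) * \<mu>)"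
    using \<open>0 \<le> \<mu>\<close> by (intro divide_left_mono mult_pos_pos) auto
  with corr show ?thesis using tops_w_pos by (auto intro: max_corr_le_mono simp: less_imp_le)
qed (simp add: max_corr_le_empty)

end

theorem theorem7p1:
  fixes d :: nat and F :: "'a set set" and w :: "'a set \<Rightarrow> real"
    and col :: "'a \<Rightarrow> nat" and lam :: real and I J :: "nat set"
  assumes "weighted_complex d F w"
    and "partite d F col"
    and "0 < lam" and "lam < 1/2"
    and "one_sided_link_expander d F w (lam / ((real d + 1) * lam + 1))"
    and "I \<subseteq> {0..d}" and "J \<subseteq> {0..d}"
    and "I \<noteq> {}" and "J \<noteq> {}" and "I \<inter> J = {}"
  shows "bip_lambda d F w col I J \<le> ereal (real (card I) * real (card J) * lam)"
proof -
  interpret partite_complex d F w col using assms(1,2) by unfold_locales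
  define \<mu> where "\<mu> = lam / ((real d + 1) * lam + 1)"
  define \<gamma> where "\<gamma> = lam / (2 * lam + 1)"
  have den: "0 < (real d + 1) * lam + 1" using assms(3) by (simp add: add_pos_pos)
  have "0 \<le> \<mu>" "real d * \<mu> < 1" using den assms(3) by (simp_all add: \<mu>_def field_simps)
  have "1 - (real d - 1) * \<mu> = (2 * lam + 1) / ((real d + 1) * lam + 1)"
    using den by (simp add: \<mu>_def field_simps)
  then have "\<mu> / (1 - (real d - 1) * \<mu>) = \<gamma>"
    using den assms(3) by (simp add: \<mu>_def \<gamma>_def)
  then have pairs: "link_corr_le s {i} {j} \<gamma>"
    if "i \<noteq> j" "i \<le> d" "j \<le> d" "i \<notin> col ` s" "j \<notin> col ` s" for s i j
    using link_corr_le_pair_uniform[OF assms(5)[folded \<mu>_def] \<open>0 \<le> \<mu>\<close> \<open>real d * \<mu> < 1\<close> that] by simp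
  have "0 \<le> \<gamma>" "\<gamma> \<le> lam" using assms(3) by (simp_all add: \<gamma>_def field_simps)
  have "bip_lambda d F w col I J \<le> ereal (real (card J) * real (card I) * \<gamma>)"
    using link_corr_le_card_card[OF pairs \<open>0 \<le> \<gamma>\<close> assms(6-10)] \<open>0 \<le> \<gamma>\<close>
    by (intro bip_lambda_le[OF assms(6,7)]) auto
  also have "\<dots> \<le> ereal (real (card I) * real (card J) * lam)"
    using \<open>\<gamma> \<le> lam\<close> by (simp add: mult.commute mult_right_mono)
  finally show ?thesis .
qed

end
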